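(* Let $q\ge 2$ be an integer, $s\in(0,2)$, and let $P(x,t)=|\Psi(x,t)|^2$ be as in the context. Then for any $T>0$ the graph of $P$ over $[0,\pi]\times[0,T]$, i.e. the surface $\{(x,t,P(x,t))\}\subset\mathbb R^3$, has box-counting dimension $D_{xt}=2+s/2$.
   Context: For an integer $q\ge2$ and $s\in(0,2)$ define, for $x\in[0,\pi]$ and $t\in\mathbb R$, $$\Psi(x,t)=N\sum_{n=0}^{\infty} q^{n(s-2)}\sin(q^n x)\,e^{-i q^{2n} t},\qquad N=\sqrt{\tfrac{2}{\pi}\big(1-q^{2(s-2)}\big)}.$$ Let $P(x,t)=|\Psi(x,t)|^2$. For a bounded set $A\subset\mathbb R^3$ let $N(\delta)$ be the number of cubes $[m_1\delta,(m_1+1)\delta]\times[m_2\delta,(m_2+1)\delta]\times[m_3\delta,(m_3+1)\delta]$, $m_i\in\mathbb Z$, meeting $A$. The box-counting dimension is $\lim_{\delta\to0}\ln N(\delta)/\ln(1/\delta)$ when this limit exists. *)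

theory Defs
  imports "HOL-Analysis.Analysis"
begin

definition norm_const :: "nat \<Rightarrow> real \<Rightarrow> real" where
  "norm_const q s = sqrt ((2 / pi) * (1 - (real q) powr (2 * (s - 2))))"

definition Psi :: "nat \<Rightarrow> real \<Rightarrow> real \<Rightarrow> real \<Rightarrow> complex" where
  "Psi q s x t = complex_of_real (norm_const q s) *
     (\<Sum>n. complex_of_real ((real q) powr (real n * (s - 2)) * sin ((real q) ^ n * x))
            * exp (- \<i> * complex_of_real ((real q) ^ (2 * n) * t)))"

definition Prob :: "nat \<Rightarrow> real \<Rightarrow> real \<Rightarrow> real \<Rightarrow> real" where
  "Prob q s x t = (cmod (Psi q s x t))\<^sup>2"

definition box_count :: "(real \<times> real \<times> real) set \<Rightarrow> real \<Rightarrow> nat" where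
  "box_count A \<delta> = card {m :: int \<times> int \<times> int.
      \<exists>p \<in> A. of_int (fst m) * \<delta> \<le> fst p \<and> fst p \<le> (of_int (fst m) + 1) * \<delta>
        \<and> of_int (fst (snd m)) * \<delta> \<le> fst (snd p) \<and> fst (snd p) \<le> (of_int (fst (snd m)) + 1) * \<delta>
        \<and> of_int (snd (snd m)) * \<delta> \<le> snd (snd p) \<and> snd (snd p) \<le> (of_int (snd (snd m)) + 1) * \<delta>}"

definition has_box_dim :: "(real \<times> real \<times> real) set \<Rightarrow> real \<Rightarrow> bool" where
  "has_box_dim A d \<longleftrightarrow>
     ((\<lambda>\<delta>. ln (real (box_count A \<delta>)) / ln (1 / \<delta>)) \<longlongrightarrow> d) (at_right 0)"

end

theory Submission
  imports Defs "HOL-Real_Asymp.Real_Asymp"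
begin
lemma norm_cis_minus_one: "norm (cis a - 1) = 2 * \<bar>sin (a / 2)\<bar>"
  using dist_exp_i_1[of a] by (simp add: cis_conv_exp)

lemma norm_cis_minus_one_le: "norm (cis a - 1) \<le> 2"
  unfolding norm_cis_minus_one by simp

lemma norm_cis_diff_le: "norm (cis a - cis b) \<le> \<bar>a - b\<bar>"
proof -
  have "cis a - cis b = cis b * (cis (a - b) - 1)"
    by (simp add: right_diff_distrib cis_mult)
  then have "norm (cis a - cis b) = 2 * \<bar>sin ((a - b) / 2)\<bar>"
    by (simp add: norm_mult norm_cis_minus_one)
  also have "\<dots> \<le> \<bar>a - b\<bar>"
    using abs_sin_x_le_abs_x[of "(a - b) / 2"] by simp
  finally show ?thesis .
qed

lemma abs_sin_diff_le: "\<bar>sin a - sin b\<bar> \<le> \<bar>a - b :: real\<bar>"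
  using abs_Im_le_cmod[of "cis a - cis b"] norm_cis_diff_le[of a b] by simp

lemma sin_ge_cubic: fixes x :: real assumes "0 \<le> x" shows "x - x ^ 3 / 6 \<le> sin x"
proof -
  have "\<bar>sin x - (\<Sum>m<3. sin_coeff m * x ^ m)\<bar> \<le> inverse (fact 3) * \<bar>x\<bar> ^ 3"
    by (rule Maclaurin_sin_bound)
  moreover have "(\<Sum>m<3. sin_coeff m * x ^ m) = x"
    by (simp add: sin_coeff_def eval_nat_numeral)
  ultimately have "\<bar>sin x - x\<bar> \<le> x ^ 3 / 6"
    using assms by (simp add: fact_numeral)
  then show ?thesis
    using abs_ge_minus_self[of "sin x - x"] by linarith
qed

lemma exists_quarter_turn_Re_ge:
  assumes "\<omega> > 0"
  shows "\<exists>t\<in>{t0, t0 + pi / (2 * \<omega>)}. norm z / 2 \<le> \<bar>Re (cis (\<omega> * t) * z)\<bar>"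
proof -
  let ?w = "cis (\<omega> * t0) * z"
  have quarter: "cis (\<omega> * (t0 + pi / (2 * \<omega>))) * z = \<i> * ?w"
    using assms by (simp add: distrib_left flip: cis_mult)
  have "\<bar>Re (cis (\<omega> * (t0 + pi / (2 * \<omega>))) * z)\<bar> = \<bar>Im ?w\<bar>"
    unfolding quarter by simp
  moreover have "norm z \<le> \<bar>Re ?w\<bar> + \<bar>Im ?w\<bar>"
    using cmod_le[of ?w] by (simp add: norm_mult)
  ultimately show ?thesis
    by (cases "\<bar>Im ?w\<bar> \<le> \<bar>Re ?w\<bar>") auto
qed

lemma abs_norm_sq_diff_le:
  fixes a b :: "'a::real_normed_vector"
  shows "\<bar>(norm a)\<^sup>2 - (norm b)\<^sup>2\<bar> \<le> norm (a - b) * (norm a + norm b)"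
proof -
  have "(norm a)\<^sup>2 - (norm b)\<^sup>2 = (norm a - norm b) * (norm a + norm b)"
    by (simp add: power2_eq_square algebra_simps)
  then have "\<bar>(norm a)\<^sup>2 - (norm b)\<^sup>2\<bar> = \<bar>norm a - norm b\<bar> * (norm a + norm b)"
    by (simp add: abs_mult)
  also have "\<dots> \<le> norm (a - b) * (norm a + norm b)"
    by (intro mult_right_mono norm_triangle_ineq3) simp
  finally show ?thesis .
qed

lemma geometric_sum_le:
  fixes x :: real assumes "x > 1" shows "(\<Sum>i<k. x ^ i) \<le> x ^ k / (x - 1)"
  using assms by (simp add: geometric_sum divide_right_mono)

lemma geometric_sum_le_inverse:
  fixes r :: real assumes "0 \<le> r" "r < 1"
  shows "(\<Sum>n<k. r ^ n) \<le> 1 / (1 - r)"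
proof -
  have "(\<Sum>n<k. r ^ n) = (1 - r ^ k) / (1 - r)"
    using assms by (simp add: geometric_sum field_simps)
  also have "\<dots> \<le> 1 / (1 - r)"
    using assms by (intro divide_right_mono) auto
  finally show ?thesis .
qed

lemma eventually_power_mult_le:
  fixes x :: real assumes "0 \<le> x" "x < 1" "y > 0"
  shows "\<forall>\<^sub>F n in sequentially. x ^ n * C \<le> y"
proof -
  have "(\<lambda>n. x ^ n * C) \<longlonglongrightarrow> 0"
    using tendsto_mult[OF LIMSEQ_realpow_zero[OF assms(1,2)] tendsto_const[of C]] by simp
  then have "\<forall>\<^sub>F n in sequentially. x ^ n * C < y"
    using assms(3) by (rule order_tendstoD(2))
  then show ?thesis by (rule eventually_mono) simp
qed

lemma eventually_power_gt:
  fixes x :: real assumes "x > 1"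
  shows "\<forall>\<^sub>F n in sequentially. y < x ^ n"
proof -
  obtain N where "y < x ^ N" using real_arch_pow[OF assms] by blast
  then show ?thesis
    unfolding eventually_sequentially
    using assms by (meson order_less_le_trans power_increasing less_imp_le)
qed

lemma exists_power_bracket:
  fixes x y :: real assumes "x > 1" "y \<ge> 1"
  obtains K where "x ^ K \<le> y" "y < x ^ Suc K"
proof -
  obtain n where n: "y < x ^ n" using real_arch_pow[OF assms(1)] by blast
  define m where "m = (LEAST n. y < x ^ n)"
  have m: "y < x ^ m" unfolding m_def using n by (rule LeastI)
  have "m \<noteq> 0" using m assms by (cases m) auto
  moreover have "\<not> y < x ^ (m - 1)"
    unfolding m_def by (rule not_less_Least) (use \<open>m \<noteq> 0\<close> m_def in simp)
  ultimately show ?thesis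
    using m that[of "m - 1"] by simp
qed

definition fdiff :: "nat \<Rightarrow> real \<Rightarrow> (real \<Rightarrow> complex) \<Rightarrow> real \<Rightarrow> complex" where
  "fdiff M h g t = (\<Sum>j\<le>M. (-1) ^ (M - j) * of_nat (M choose j) * g (t + real j * h))"

lemma fdiff_add: "fdiff M h (\<lambda>u. f u + g u) t = fdiff M h f t + fdiff M h g t"
  by (simp add: fdiff_def algebra_simps sum.distrib)

lemma fdiff_cmult: "fdiff M h (\<lambda>u. c * f u) t = c * fdiff M h f t"
  by (simp add: fdiff_def sum_distrib_left algebra_simps)

lemma fdiff_sum: "fdiff M h (\<lambda>u. \<Sum>i\<in>I. f i u) t = (\<Sum>i\<in>I. fdiff M h (f i) t)"
  unfolding fdiff_def by (simp add: sum_distrib_left sum.swap[of _ I])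

lemma fdiff_cnj: "fdiff M h (\<lambda>u. cnj (f u)) t = cnj (fdiff M h f t)"
  by (simp add: fdiff_def)

lemma fdiff_cis: "fdiff M h (\<lambda>u. cis (a * u)) t = (cis (a * h) - 1) ^ M * cis (a * t)"
proof -
  have "(cis (a * h) - 1) ^ M = (\<Sum>j\<le>M. of_nat (M choose j) * cis (a * h) ^ j * (-1) ^ (M - j))"
    using binomial_ring[of "cis (a * h)" "-1" M] by simp
  moreover have "cis (a * (t + real j * h)) = cis (a * h) ^ j * cis (a * t)" for j
    unfolding Complex.DeMoivre cis_mult by (simp add: algebra_simps)
  ultimately show ?thesis
    unfolding fdiff_def by (simp add: sum_distrib_left algebra_simps)
qed

lemma fdiff_const: "M \<ge> 1 \<Longrightarrow> fdiff M h (\<lambda>u. c) t = 0"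
  using fdiff_cmult[of M h c "\<lambda>u. cis (0 * u)" t] fdiff_cis[of M h 0 t] by simp

lemma periodic_shift_multiple:
  assumes "\<And>u. g (u + h) = g u" shows "g (t + real j * h) = g t"
proof (induction j)
  case (Suc j)
  then show ?case
    using assms[of "t + real j * h"] by (simp add: algebra_simps)
qed simp

lemma fdiff_periodic_mult:
  assumes "\<And>u. g (u + h) = g u"
  shows "fdiff M h (\<lambda>u. g u * f u) t = g t * fdiff M h f t"
  unfolding fdiff_def using periodic_shift_multiple[of g h, OF assms]
  by (simp add: sum_distrib_left algebra_simps)

lemma fdiff_periodic:
  assumes "\<And>u. g (u + h) = g u" "M \<ge> 1"
  shows "fdiff M h g t = 0"
  using fdiff_periodic_mult[of g h M "\<lambda>u. 1" t, OF assms(1)] fdiff_const[OF assms(2)] by simp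

lemma norm_fdiff_diff_le:
  assumes "\<And>j. j \<le> M \<Longrightarrow> norm (f (t + real j * h) - g (t + real j * h)) \<le> E"
  shows "norm (fdiff M h f t - fdiff M h g t) \<le> 2 ^ M * E"
proof -
  have "norm (fdiff M h f t - fdiff M h g t)
      = norm (\<Sum>j\<le>M. (-1) ^ (M - j) * of_nat (M choose j) * (f (t + real j * h) - g (t + real j * h)))"
    unfolding fdiff_def by (simp add: algebra_simps sum_subtractf)
  also have "\<dots> \<le> (\<Sum>j\<le>M. real (M choose j) * E)"
    by (rule order_trans[OF norm_sum sum_mono])
      (simp add: norm_mult norm_power assms mult_left_mono)
  also have "\<dots> = 2 ^ M * E"
    by (simp add: choose_row_sum flip: sum_distrib_right of_nat_sum)
  finally show ?thesis .
qed

lemma norm_fdiff_le: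
  assumes "M \<ge> 1" "\<And>j. j \<le> M \<Longrightarrow> norm (f (t + real j * h) - f t) \<le> E"
  shows "norm (fdiff M h f t) \<le> 2 ^ M * E"
  using norm_fdiff_diff_le[of M f t h "\<lambda>u. f t" E] assms fdiff_const[OF assms(1)] by simp

lemma exists_increment_ge_fdiff:
  assumes "M \<ge> 1"
  obtains j where "j \<le> M" "norm (fdiff M h f t) \<le> 2 ^ M * norm (f (t + real j * h) - f t)"
proof -
  let ?d = "\<lambda>j. norm (f (t + real j * h) - f t)"
  have "Max (?d ` {..M}) \<in> ?d ` {..M}" by (rule Max_in) auto
  then obtain j where j: "j \<le> M" "Max (?d ` {..M}) = ?d j" by blast
  have "norm (fdiff M h f t) \<le> 2 ^ M * ?d j"
    unfolding j(2)[symmetric] by (intro norm_fdiff_le[OF assms] Max_ge) auto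
  then show ?thesis using that j(1) by blast
qed

lemma norm_fdiff_mult_cis_approx:
  assumes "\<And>j. j \<le> M \<Longrightarrow> norm (f (t + real j * h) - f t) \<le> E"
  shows "norm (fdiff M h (\<lambda>u. f u * cis (a * u)) t - cis (a * t) * (cis (a * h) - 1) ^ M * f t)
    \<le> 2 ^ M * E"
proof -
  have "fdiff M h (\<lambda>u. f t * cis (a * u)) t = cis (a * t) * (cis (a * h) - 1) ^ M * f t"
    by (simp add: fdiff_cmult fdiff_cis)
  moreover have "norm (fdiff M h (\<lambda>u. f u * cis (a * u)) t - fdiff M h (\<lambda>u. f t * cis (a * u)) t)
      \<le> 2 ^ M * E"
    by (rule norm_fdiff_diff_le) (simp add: norm_mult assms flip: left_diff_distrib)
  ultimately show ?thesis by simp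
qed

definition meeting_cubes :: "(real \<times> real \<times> real) set \<Rightarrow> real \<Rightarrow> (int \<times> int \<times> int) set" where
  "meeting_cubes A \<delta> = {m :: int \<times> int \<times> int.
      \<exists>p \<in> A. of_int (fst m) * \<delta> \<le> fst p \<and> fst p \<le> (of_int (fst m) + 1) * \<delta>
        \<and> of_int (fst (snd m)) * \<delta> \<le> fst (snd p) \<and> fst (snd p) \<le> (of_int (fst (snd m)) + 1) * \<delta>
        \<and> of_int (snd (snd m)) * \<delta> \<le> snd (snd p) \<and> snd (snd p) \<le> (of_int (snd (snd m)) + 1) * \<delta>}"

lemma box_count_eq_card: "box_count A \<delta> = card (meeting_cubes A \<delta>)"
  unfolding box_count_def meeting_cubes_def ..

definition grid_cells :: "real \<Rightarrow> real set \<Rightarrow> int set" where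
  "grid_cells \<delta> Y = {m. \<exists>y\<in>Y. of_int m * \<delta> \<le> y \<and> y \<le> (of_int m + 1) * \<delta>}"

lemma floor_divide_bracket:
  fixes y \<delta> :: real
  assumes "\<delta> > 0"
  shows "of_int \<lfloor>y / \<delta>\<rfloor> * \<delta> \<le> y" "y \<le> (of_int \<lfloor>y / \<delta>\<rfloor> + 1) * \<delta>"
  using of_int_floor_le[of "y / \<delta>"] real_of_int_floor_add_one_ge[of "y / \<delta>"]
  by (simp_all only: assms pos_le_divide_eq pos_divide_le_eq)

lemma int_between_eq_atLeastAtMost:
  fixes a b :: real
  shows "{m::int. a \<le> of_int m \<and> of_int m \<le> b} = {\<lceil>a\<rceil>..\<lfloor>b\<rfloor>}"
  by (auto simp: ceiling_le_iff le_floor_iff)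

lemma finite_int_between:
  fixes a b :: real
  shows "finite {m::int. a \<le> of_int m \<and> of_int m \<le> b}"
  unfolding int_between_eq_atLeastAtMost by simp

lemma card_int_between_ge:
  fixes a b :: real
  shows "b - a - 1 \<le> real (card {m::int. a \<le> of_int m \<and> of_int m \<le> b})"
proof -
  have "of_int (\<lfloor>b\<rfloor> - \<lceil>a\<rceil> + 1) \<le> real (card {\<lceil>a\<rceil>..\<lfloor>b\<rfloor>})" by simp
  then show ?thesis
    unfolding int_between_eq_atLeastAtMost
    using real_of_int_floor_gt_diff_one[of b] of_int_ceiling_le_add_one[of a] by linarith
qed

lemma card_int_between_le:
  fixes a b :: real
  assumes "a \<le> b"
  shows "real (card {m::int. a \<le> of_int m \<and> of_int m \<le> b}) \<le> b - a + 1"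
proof -
  have "real (card {\<lceil>a\<rceil>..\<lfloor>b\<rfloor>}) \<le> max 0 (of_int (\<lfloor>b\<rfloor> - \<lceil>a\<rceil> + 1))" by simp
  then show ?thesis
    unfolding int_between_eq_atLeastAtMost
    using of_int_floor_le[of b] le_of_int_ceiling[of a] assms by linarith
qed

lemma grid_cells_subset:
  assumes "\<delta> > 0" "Y \<subseteq> {c..d}"
  shows "grid_cells \<delta> Y \<subseteq> {m. c / \<delta> - 1 \<le> of_int m \<and> of_int m \<le> d / \<delta>}"
proof
  fix m assume "m \<in> grid_cells \<delta> Y"
  then obtain y where "y \<in> Y" "of_int m * \<delta> \<le> y" "y \<le> (of_int m + 1) * \<delta>"
    unfolding grid_cells_def by blast
  moreover have "c \<le> y" "y \<le> d" using assms(2) \<open>y \<in> Y\<close> by auto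
  ultimately have "c \<le> (of_int m + 1) * \<delta>" "of_int m * \<delta> \<le> d" by linarith+
  then have "c / \<delta> \<le> of_int m + 1" "of_int m \<le> d / \<delta>"
    using assms(1) by (simp_all add: pos_le_divide_eq pos_divide_le_eq)
  then show "m \<in> {m. c / \<delta> - 1 \<le> of_int m \<and> of_int m \<le> d / \<delta>}" by simp
qed

lemma finite_grid_cells:
  assumes "\<delta> > 0" "Y \<subseteq> {c..d}"
  shows "finite (grid_cells \<delta> Y)"
  using grid_cells_subset[OF assms] finite_int_between finite_subset by blast

lemma card_grid_cells_le:
  assumes "\<delta> > 0" "Y \<subseteq> {c..d}" "c \<le> d"
  shows "real (card (grid_cells \<delta> Y)) \<le> (d - c) / \<delta> + 2"
proof -
  have "card (grid_cells \<delta> Y) \<le> card {m::int. c / \<delta> - 1 \<le> of_int m \<and> of_int m \<le> d / \<delta>}"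
    by (intro card_mono finite_int_between grid_cells_subset assms)
  also have "real \<dots> \<le> d / \<delta> - (c / \<delta> - 1) + 1"
    using divide_right_mono[OF assms(3), of \<delta>] assms(1) by (intro card_int_between_le) simp
  finally show ?thesis by (simp add: diff_divide_distrib)
qed

definition surface :: "(real \<Rightarrow> real \<Rightarrow> real) \<Rightarrow> real \<Rightarrow> real \<Rightarrow> (real \<times> real \<times> real) set" where
  "surface f a b = {(x, t, f x t) | x t. x \<in> {0..a} \<and> t \<in> {0..b}}"

lemma box_count_graph_le:
  fixes f :: "real \<Rightarrow> real \<Rightarrow> real" and a b :: real
  assumes \<delta>: "\<delta> > 0" and a: "a \<ge> 0" and b: "b \<ge> 0" and \<Omega>: "\<Omega> \<ge> 0"
    and osc: "\<And>x t x' t'. x \<in> {0..a} \<Longrightarrow> t \<in> {0..b} \<Longrightarrow> x' \<in> {0..a} \<Longrightarrow> t' \<in> {0..b}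
       \<Longrightarrow> \<bar>x - x'\<bar> \<le> \<delta> \<Longrightarrow> \<bar>t - t'\<bar> \<le> \<delta> \<Longrightarrow> \<bar>f x t - f x' t'\<bar> \<le> \<Omega>"
  shows "finite (meeting_cubes (surface f a b) \<delta>)"
    and "real (box_count (surface f a b) \<delta>) \<le> (a / \<delta> + 2) * (b / \<delta> + 2) * (2 * \<Omega> / \<delta> + 2)"
proof -
  define cell where "cell m1 m2 = {(x, t). x \<in> {0..a} \<and> t \<in> {0..b}
      \<and> of_int m1 * \<delta> \<le> x \<and> x \<le> (of_int m1 + 1) * \<delta> \<and> of_int m2 * \<delta> \<le> t \<and> t \<le> (of_int m2 + 1) * \<delta>}"
    for m1 m2 :: int
  define column where "column m1 m2 = grid_cells \<delta> ((\<lambda>(x, t). f x t) ` cell m1 m2)" for m1 m2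
  have column: "finite (column m1 m2) \<and> real (card (column m1 m2)) \<le> 2 * \<Omega> / \<delta> + 2" for m1 m2
  proof (cases "cell m1 m2 = {}")
    case False
    then obtain x0 t0 where p0: "(x0, t0) \<in> cell m1 m2" by auto
    have "(\<lambda>(x, t). f x t) ` cell m1 m2 \<subseteq> {f x0 t0 - \<Omega>..f x0 t0 + \<Omega>}"
    proof clarify
      fix x t assume "(x, t) \<in> cell m1 m2"
      with p0 have "\<bar>f x t - f x0 t0\<bar> \<le> \<Omega>"
        unfolding cell_def by (intro osc) (auto simp: ring_distribs abs_le_iff)
      then show "f x t \<in> {f x0 t0 - \<Omega>..f x0 t0 + \<Omega>}" by auto
    qed
    then have "finite (column m1 m2)"
      and "real (card (column m1 m2)) \<le> (f x0 t0 + \<Omega> - (f x0 t0 - \<Omega>)) / \<delta> + 2"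
      unfolding column_def using \<delta> \<Omega> by (intro finite_grid_cells card_grid_cells_le; simp)+
    then show ?thesis by simp
  qed (use \<delta> \<Omega> in \<open>simp add: column_def grid_cells_def\<close>)
  have sub: "meeting_cubes (surface f a b) \<delta> \<subseteq> (SIGMA m1:grid_cells \<delta> {0..a}. SIGMA m2:grid_cells \<delta> {0..b}. column m1 m2)"
    unfolding meeting_cubes_def surface_def column_def grid_cells_def cell_def by fastforce
  have fin_ab: "finite (grid_cells \<delta> {0..a})" "finite (grid_cells \<delta> {0..b})"
    using finite_grid_cells[OF \<delta> order_refl] by auto
  have fin: "finite (SIGMA m1:grid_cells \<delta> {0..a}. SIGMA m2:grid_cells \<delta> {0..b}. column m1 m2)"
    using column fin_ab by (intro finite_SigmaI) auto
  then show "finite (meeting_cubes (surface f a b) \<delta>)" using sub finite_subset by blast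
  have "real (box_count (surface f a b) \<delta>)
      \<le> (\<Sum>m1\<in>grid_cells \<delta> {0..a}. \<Sum>m2\<in>grid_cells \<delta> {0..b}. real (card (column m1 m2)))"
    unfolding box_count_eq_card using card_mono[OF fin sub] column fin_ab
    by (simp add: card_SigmaI flip: of_nat_sum)
  also have "\<dots> \<le> (\<Sum>m1\<in>grid_cells \<delta> {0..a}. \<Sum>m2\<in>grid_cells \<delta> {0..b}. 2 * \<Omega> / \<delta> + 2)"
    by (intro sum_mono) (simp add: column)
  also have "\<dots> = real (card (grid_cells \<delta> {0..a})) * real (card (grid_cells \<delta> {0..b})) * (2 * \<Omega> / \<delta> + 2)"
    by simp
  also have "\<dots> \<le> (a / \<delta> + 2) * (b / \<delta> + 2) * (2 * \<Omega> / \<delta> + 2)"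
  proof (intro mult_right_mono mult_mono)
    show "real (card (grid_cells \<delta> {0..a})) \<le> a / \<delta> + 2" "real (card (grid_cells \<delta> {0..b})) \<le> b / \<delta> + 2"
      using card_grid_cells_le[OF \<delta> order_refl, of 0 a] card_grid_cells_le[OF \<delta> order_refl, of 0 b]
        a b by simp_all
  qed (use \<delta> a b \<Omega> in simp_all)
  finally show "real (box_count (surface f a b) \<delta>) \<le> (a / \<delta> + 2) * (b / \<delta> + 2) * (2 * \<Omega> / \<delta> + 2)" .
qed

lemma exists_level_crossing:
  fixes g :: "real \<Rightarrow> real"
  assumes "continuous_on {lo..hi} g" "t1 \<in> {lo..hi}" "t2 \<in> {lo..hi}"
    and "min (g t1) (g t2) \<le> y" "y \<le> max (g t1) (g t2)"
  shows "\<exists>\<tau>\<in>{lo..hi}. g \<tau> = y"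
proof -
  have seg: "closed_segment t1 t2 \<subseteq> {lo..hi}"
    using assms(2,3) by (intro closed_segment_subset) auto
  have "y \<in> closed_segment (g t1) (g t2)"
    using assms(4,5) by (auto simp: closed_segment_eq_real_ivl min_def max_def split: if_splits)
  then show ?thesis
    using IVT'_closed_segment_real[of y g t1 t2] continuous_on_subset[OF assms(1) seg] seg by blast
qed

lemma abs_diff_le_if_floor_divide_eq:
  fixes u v \<delta> :: real
  assumes "\<delta> > 0" "\<lfloor>u / \<delta>\<rfloor> = \<lfloor>v / \<delta>\<rfloor>"
  shows "\<bar>u - v\<bar> \<le> \<delta>"
  using floor_divide_bracket[OF assms(1), of u] floor_divide_bracket[OF assms(1), of v] assms(2)
  by (simp add: abs_le_iff algebra_simps)

lemma box_count_graph_ge: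
  fixes f :: "real \<Rightarrow> real \<Rightarrow> real" and a b \<delta> \<Omega> :: real and lo hi :: "'b \<Rightarrow> real"
  assumes \<delta>: "\<delta> > 0" and "finite X" "finite B" "X \<subseteq> {0..a}"
    and inj: "inj_on (\<lambda>x. \<lfloor>x / \<delta>\<rfloor>) X"
    and blocks: "\<And>\<beta>. \<beta> \<in> B \<Longrightarrow> 0 \<le> lo \<beta> \<and> hi \<beta> \<le> b"
    and sep: "\<And>\<beta> \<beta>' t t'. \<beta> \<in> B \<Longrightarrow> \<beta>' \<in> B \<Longrightarrow> \<beta> \<noteq> \<beta>'
       \<Longrightarrow> t \<in> {lo \<beta>..hi \<beta>} \<Longrightarrow> t' \<in> {lo \<beta>'..hi \<beta>'} \<Longrightarrow> \<delta> < \<bar>t - t'\<bar>"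
    and cont: "\<And>x. x \<in> X \<Longrightarrow> continuous_on {0..b} (f x)"
    and osc: "\<And>x \<beta>. x \<in> X \<Longrightarrow> \<beta> \<in> B
       \<Longrightarrow> \<exists>t1\<in>{lo \<beta>..hi \<beta>}. \<exists>t2\<in>{lo \<beta>..hi \<beta>}. \<Omega> \<le> \<bar>f x t1 - f x t2\<bar>"
    and fin: "finite (meeting_cubes (surface f a b) \<delta>)"
  shows "real (card X) * real (card B) * (\<Omega> / \<delta> - 1) \<le> real (box_count (surface f a b) \<delta>)"
proof -
  obtain t1 t2 where t12: "\<And>x \<beta>. x \<in> X \<Longrightarrow> \<beta> \<in> B \<Longrightarrow> t1 x \<beta> \<in> {lo \<beta>..hi \<beta>}
      \<and> t2 x \<beta> \<in> {lo \<beta>..hi \<beta>} \<and> \<Omega> \<le> \<bar>f x (t1 x \<beta>) - f x (t2 x \<beta>)\<bar>"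
    using osc by metis
  define levels where "levels x \<beta> = {l::int. min (f x (t1 x \<beta>)) (f x (t2 x \<beta>)) / \<delta> \<le> of_int l
      \<and> of_int l \<le> max (f x (t1 x \<beta>)) (f x (t2 x \<beta>)) / \<delta>}" for x \<beta>
  define S where "S = Sigma (X \<times> B) (\<lambda>(x, \<beta>). levels x \<beta>)"
  have "\<exists>\<tau>\<in>{lo \<beta>..hi \<beta>}. f x \<tau> = of_int l * \<delta>" if "((x, \<beta>), l) \<in> S" for x \<beta> l
  proof (rule exists_level_crossing)
    show "continuous_on {lo \<beta>..hi \<beta>} (f x)"
      using that blocks cont unfolding S_def by (force intro: continuous_on_subset)
    have "min (f x (t1 x \<beta>)) (f x (t2 x \<beta>)) / \<delta> \<le> of_int l"
      "of_int l \<le> max (f x (t1 x \<beta>)) (f x (t2 x \<beta>)) / \<delta>"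
      using that unfolding S_def levels_def by auto
    then show "min (f x (t1 x \<beta>)) (f x (t2 x \<beta>)) \<le> of_int l * \<delta>"
      "of_int l * \<delta> \<le> max (f x (t1 x \<beta>)) (f x (t2 x \<beta>))"
      using \<delta> by (simp_all add: pos_divide_le_eq pos_le_divide_eq)
  qed (use that t12 in \<open>auto simp: S_def\<close>)
  then obtain tau where tau: "\<And>x \<beta> l. ((x, \<beta>), l) \<in> S \<Longrightarrow> tau x \<beta> l \<in> {lo \<beta>..hi \<beta>}
      \<and> f x (tau x \<beta> l) = of_int l * \<delta>"
    by metis
  define cube where "cube = (\<lambda>((x, \<beta>), l). (\<lfloor>x / \<delta>\<rfloor>, \<lfloor>tau x \<beta> l / \<delta>\<rfloor>, l))"
  have "cube ((x, \<beta>), l) \<in> meeting_cubes (surface f a b) \<delta>" if p: "((x, \<beta>), l) \<in> S" for x \<beta> l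
  proof -
    have "(x, tau x \<beta> l, f x (tau x \<beta> l)) \<in> surface f a b"
      using tau[OF p] blocks p \<open>X \<subseteq> {0..a}\<close> unfolding surface_def S_def by force
    then show ?thesis
      unfolding meeting_cubes_def cube_def using tau[OF p] floor_divide_bracket[OF \<delta>] \<delta>
      by (auto intro!: bexI simp: distrib_right)
  qed
  then have sub: "cube ` S \<subseteq> meeting_cubes (surface f a b) \<delta>" by auto
  have inj_cube: "inj_on cube S"
  proof (rule inj_onI)
    fix p p' assume "p \<in> S" "p' \<in> S" and "cube p = cube p'"
    moreover obtain x \<beta> l x' \<beta>' l' where "p = ((x, \<beta>), l)" "p' = ((x', \<beta>'), l')"
      by (metis prod.collapse)
    ultimately have p: "((x, \<beta>), l) \<in> S" and p': "((x', \<beta>'), l') \<in> S"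
      and eq: "\<lfloor>x / \<delta>\<rfloor> = \<lfloor>x' / \<delta>\<rfloor>" "\<lfloor>tau x \<beta> l / \<delta>\<rfloor> = \<lfloor>tau x' \<beta>' l' / \<delta>\<rfloor>" "l = l'"
      by (auto simp: cube_def)
    have "x = x'" using inj_onD[OF inj eq(1)] p p' unfolding S_def by auto
    moreover have "\<beta> = \<beta>'"
    proof (rule ccontr)
      assume "\<beta> \<noteq> \<beta>'"
      then have "\<delta> < \<bar>tau x \<beta> l - tau x' \<beta>' l'\<bar>"
        using sep tau[OF p] tau[OF p'] p p' unfolding S_def by auto
      then show False using abs_diff_le_if_floor_divide_eq[OF \<delta> eq(2)] by simp
    qed
    ultimately show "p = p'" using eq(3) \<open>p = ((x, \<beta>), l)\<close> \<open>p' = ((x', \<beta>'), l')\<close> by simp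
  qed
  have "real (card X) * real (card B) * (\<Omega> / \<delta> - 1) \<le> real (card S)"
  proof -
    have "\<Omega> / \<delta> - 1 \<le> real (card (levels x \<beta>))" if "x \<in> X" "\<beta> \<in> B" for x \<beta>
    proof -
      have "\<Omega> \<le> max (f x (t1 x \<beta>)) (f x (t2 x \<beta>)) - min (f x (t1 x \<beta>)) (f x (t2 x \<beta>))"
        using t12[OF that] by (cases "f x (t1 x \<beta>) \<le> f x (t2 x \<beta>)") (simp_all add: max_def min_def)
      then have "\<Omega> / \<delta> \<le> max (f x (t1 x \<beta>)) (f x (t2 x \<beta>)) / \<delta> - min (f x (t1 x \<beta>)) (f x (t2 x \<beta>)) / \<delta>"
        using \<delta> by (simp add: divide_right_mono flip: diff_divide_distrib)
      then show ?thesis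
        using card_int_between_ge[where a = "min (f x (t1 x \<beta>)) (f x (t2 x \<beta>)) / \<delta>"
            and b = "max (f x (t1 x \<beta>)) (f x (t2 x \<beta>)) / \<delta>"]
        unfolding levels_def by linarith
    qed
    then have "(\<Sum>(x, \<beta>)\<in>X \<times> B. \<Omega> / \<delta> - 1) \<le> (\<Sum>(x, \<beta>)\<in>X \<times> B. real (card (levels x \<beta>)))"
      by (intro sum_mono) auto
    then show ?thesis
      unfolding S_def levels_def using \<open>finite X\<close> \<open>finite B\<close>
      by (simp add: card_SigmaI finite_int_between card_cartesian_product case_prod_beta flip: of_nat_sum)
  qed
  also have "card S \<le> card (meeting_cubes (surface f a b) \<delta>)"
    by (rule card_inj_on_le[OF inj_cube sub fin])
  finally show ?thesis
    unfolding box_count_eq_card by simp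
qed

lemma has_box_dimI:
  fixes A :: "(real \<times> real \<times> real) set"
  assumes "c > 0" "C > 0" "\<delta>0 > 0"
    and bounds: "\<And>\<delta>. 0 < \<delta> \<Longrightarrow> \<delta> < \<delta>0
      \<Longrightarrow> c * \<delta> powr (-d) \<le> real (box_count A \<delta>) \<and> real (box_count A \<delta>) \<le> C * \<delta> powr (-d)"
  shows "has_box_dim A d"
  unfolding has_box_dim_def
proof (rule tendsto_sandwich)
  define N where "N \<delta> = real (box_count A \<delta>)" for \<delta>
  have bracket: "d + ln c / ln (1 / \<delta>) \<le> ln (N \<delta>) / ln (1 / \<delta>)
      \<and> ln (N \<delta>) / ln (1 / \<delta>) \<le> d + ln C / ln (1 / \<delta>)" if "0 < \<delta>" "\<delta> < min \<delta>0 1" for \<delta>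
  proof -
    have L: "ln (1 / \<delta>) > 0" using that by simp
    have "c * \<delta> powr (-d) \<le> N \<delta>" "N \<delta> \<le> C * \<delta> powr (-d)"
      using bounds that unfolding N_def by auto
    moreover have "ln (c * \<delta> powr (-d)) = ln c + d * ln (1 / \<delta>)"
      "ln (C * \<delta> powr (-d)) = ln C + d * ln (1 / \<delta>)"
      using assms that by (simp_all add: ln_mult ln_powr ln_div)
    moreover have "c * \<delta> powr (-d) > 0" using assms that by simp
    ultimately have "ln c + d * ln (1 / \<delta>) \<le> ln (N \<delta>)" "ln (N \<delta>) \<le> ln C + d * ln (1 / \<delta>)"
      by (metis ln_le_cancel_iff order_less_le_trans)+
    moreover have "d + ln c / ln (1 / \<delta>) = (ln c + d * ln (1 / \<delta>)) / ln (1 / \<delta>)"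
      "d + ln C / ln (1 / \<delta>) = (ln C + d * ln (1 / \<delta>)) / ln (1 / \<delta>)"
      using L by (simp_all add: field_simps)
    ultimately show ?thesis
      using L by (simp add: divide_right_mono)
  qed
  have "eventually (\<lambda>\<delta>. 0 < \<delta> \<and> \<delta> < min \<delta>0 1) (at_right (0::real))"
    using eventually_at_right_real[of 0 "min \<delta>0 1"] assms(3) by simp
  then show "eventually (\<lambda>\<delta>. d + ln c / ln (1 / \<delta>) \<le> ln (real (box_count A \<delta>)) / ln (1 / \<delta>)) (at_right 0)"
    and "eventually (\<lambda>\<delta>. ln (real (box_count A \<delta>)) / ln (1 / \<delta>) \<le> d + ln C / ln (1 / \<delta>)) (at_right 0)"
    by (eventually_elim, use bracket in \<open>simp add: N_def\<close>)+
  show "((\<lambda>\<delta>. d + ln c / ln (1 / \<delta>)) \<longlongrightarrow> d) (at_right 0)"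
    and "((\<lambda>\<delta>. d + ln C / ln (1 / \<delta>)) \<longlongrightarrow> d) (at_right 0)" by real_asymp+
qed

lemma continuous_on_if_holder:
  fixes g :: "real \<Rightarrow> real"
  assumes "C > 0" "\<alpha> > 0"
    and holder: "\<And>\<delta> y y'. 0 < \<delta> \<Longrightarrow> \<delta> \<le> 1 \<Longrightarrow> \<bar>y - y'\<bar> \<le> \<delta> \<Longrightarrow> \<bar>g y - g y'\<bar> \<le> C * \<delta> powr \<alpha>"
  shows "continuous_on S g"
  unfolding continuous_on_iff
proof (intro ballI allI impI)
  fix y e :: real assume "e > 0"
  define d where "d = min 1 ((e / (2 * C)) powr (1 / \<alpha>))"
  have "d > 0" unfolding d_def using \<open>e > 0\<close> assms by simp
  have "C * d powr \<alpha> \<le> C * ((e / (2 * C)) powr (1 / \<alpha>)) powr \<alpha>"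
    using \<open>d > 0\<close> assms by (intro mult_left_mono powr_mono2) (auto simp: d_def)
  also have "\<dots> = e / 2"
    using \<open>e > 0\<close> assms by (simp add: powr_powr)
  finally have small: "C * d powr \<alpha> < e" using \<open>e > 0\<close> by simp
  show "\<exists>d>0. \<forall>y'\<in>S. dist y' y < d \<longrightarrow> dist (g y') (g y) < e"
  proof (intro exI[of _ d] conjI ballI impI)
    fix y' assume "dist y' y < d"
    then have "\<bar>g y' - g y\<bar> \<le> C * d powr \<alpha>"
      using \<open>d > 0\<close> by (intro holder) (auto simp: d_def dist_real_def)
    then show "dist (g y') (g y) < e" using small by (simp add: dist_real_def)
  qed (rule \<open>d > 0\<close>)
qed

locale lacunary_wave =
  fixes q :: nat and s :: real
  assumes q_ge_2: "q \<ge> 2" and s_pos: "0 < s" and s_less_2: "s < 2"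
begin

definition r :: real where "r = real q powr (s - 2)"

definition lam :: real where "lam = (real q)\<^sup>2"

definition amp :: "nat \<Rightarrow> real \<Rightarrow> real" where "amp n x = r ^ n * sin (real q ^ n * x)"

definition wave :: "nat \<Rightarrow> real \<Rightarrow> real \<Rightarrow> complex" where
  "wave n x t = complex_of_real (amp n x) * cis (- (lam ^ n * t))"

definition F :: "real \<Rightarrow> real \<Rightarrow> complex" where "F x t = (\<Sum>n. wave n x t)"

definition head :: "nat \<Rightarrow> real \<Rightarrow> real \<Rightarrow> complex" where "head k x t = (\<Sum>n<k. wave n x t)"

definition tail :: "nat \<Rightarrow> real \<Rightarrow> real \<Rightarrow> complex" where "tail k x t = (\<Sum>n. wave (n + k) x t)"

definition lip :: "nat \<Rightarrow> real" where "lip k = (r * lam) ^ k / (r * lam - 1)"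

lemma q_ge_2_real: "real q \<ge> 2" using q_ge_2 by simp

lemma r_pos: "r > 0" unfolding r_def using q_ge_2 by simp

lemma r_less_1: "r < 1"
  unfolding r_def using q_ge_2 s_less_2 powr_less_mono[of "s - 2" 0 "real q"] by simp

lemma lam_ge_4: "lam \<ge> 4"
  unfolding lam_def using power_mono[OF q_ge_2_real, of 2] by simp

lemma lam_pos: "lam > 0" using lam_ge_4 by simp

lemma r_lam_eq: "r * lam = real q powr s"
  unfolding r_def lam_def using q_ge_2 by (simp add: powr_add[symmetric] flip: powr_numeral)

lemma r_lam_gt_1: "r * lam > 1"
  unfolding r_lam_eq using q_ge_2 s_pos powr_less_mono[of 0 s "real q"] by simp

lemma powr_eq_r_power: "real q powr (real n * (s - 2)) = r ^ n"
  unfolding r_def using q_ge_2 by (simp add: powr_powr mult.commute flip: powr_realpow)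

lemma power_eq_lam_power: "real q ^ (2 * n) = lam ^ n"
  unfolding lam_def by (simp add: power_mult)

lemma r_power_eq_powr: "r ^ K = (lam ^ K) powr (-(1 - s / 2))"
proof -
  have "(lam ^ K) powr (-(1 - s / 2)) = real q powr (real K * (s - 2))"
    unfolding lam_def using q_ge_2
    by (simp add: powr_powr flip: powr_realpow powr_numeral) (simp add: algebra_simps)
  then show ?thesis by (simp add: powr_eq_r_power)
qed

lemma Psi_eq: "Psi q s x t = complex_of_real (norm_const q s) * F x t"
  unfolding Psi_def F_def wave_def amp_def powr_eq_r_power power_eq_lam_power
  by (simp add: cis_conv_exp)

lemma Prob_eq: "Prob q s x t = (norm_const q s)\<^sup>2 * (norm (F x t))\<^sup>2"
  unfolding Prob_def Psi_eq by (simp add: norm_mult power_mult_distrib)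

lemma norm_const_pos: "norm_const q s > 0"
  unfolding norm_const_def using q_ge_2 s_less_2 powr_less_mono[of "2 * (s - 2)" 0 "real q"] by simp

lemma abs_amp_le: "\<bar>amp n x\<bar> \<le> r ^ n"
  unfolding amp_def using r_pos by (simp add: abs_mult mult_left_le)

lemma norm_wave: "norm (wave n x t) = \<bar>amp n x\<bar>"
  unfolding wave_def by (simp add: norm_mult)

lemma norm_wave_shift_le: "norm (wave (n + k) x t) \<le> r ^ k * r ^ n"
  using abs_amp_le[of "n + k" x] by (simp add: norm_wave power_add mult.commute)

lemma summable_norm_wave: "summable (\<lambda>n. norm (wave (n + k) x t))"
  using r_pos r_less_1 norm_wave_shift_le
  by (intro summable_comparison_test'[where N = 0, OF summable_mult[OF summable_geometric]]) auto

lemma norm_tail_le: "norm (tail k x t) \<le> r ^ k / (1 - r)"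
proof -
  have "norm (tail k x t) \<le> (\<Sum>n. norm (wave (n + k) x t))"
    unfolding tail_def by (rule summable_norm[OF summable_norm_wave])
  also have "\<dots> \<le> (\<Sum>n. r ^ k * r ^ n)"
    using summable_norm_wave r_pos r_less_1 norm_wave_shift_le
    by (intro suminf_le summable_mult summable_geometric) auto
  also have "\<dots> = r ^ k / (1 - r)"
    using r_pos r_less_1 by (simp add: suminf_mult suminf_geometric summable_geometric)
  finally show ?thesis .
qed

lemma norm_F_le: "norm (F x t) \<le> 1 / (1 - r)"
  using norm_tail_le[of 0 x t] unfolding F_def tail_def by simp

lemma F_eq_head_plus_tail: "F x t = head k x t + tail k x t"
  using suminf_split_initial_segment[where k = k, OF summable_norm_cancel[OF summable_norm_wave[of 0 x t]]]
  unfolding F_def head_def tail_def by simp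

lemma F_eq_head_wave_tail: "F x t = head k x t + wave k x t + tail (Suc k) x t"
  using F_eq_head_plus_tail[of x t "Suc k"] by (simp add: head_def)

lemma norm_wave_diff_t_le: "norm (wave n x t - wave n x t') \<le> (r * lam) ^ n * \<bar>t - t'\<bar>"
proof -
  have "norm (wave n x t - wave n x t') = \<bar>amp n x\<bar> * norm (cis (- (lam ^ n * t)) - cis (- (lam ^ n * t')))"
    unfolding wave_def by (simp add: norm_mult flip: right_diff_distrib)
  also have "\<dots> \<le> r ^ n * (lam ^ n * \<bar>t - t'\<bar>)"
  proof (intro mult_mono abs_amp_le)
    have "\<bar>- (lam ^ n * t) - - (lam ^ n * t')\<bar> = lam ^ n * \<bar>t - t'\<bar>"
      using lam_pos by (simp add: abs_mult abs_minus_commute flip: right_diff_distrib)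
    then show "norm (cis (- (lam ^ n * t)) - cis (- (lam ^ n * t'))) \<le> lam ^ n * \<bar>t - t'\<bar>"
      using norm_cis_diff_le by metis
  qed (use r_pos in simp_all)
  finally show ?thesis by (simp add: power_mult_distrib mult.assoc)
qed

lemma norm_wave_diff_x_le: "norm (wave n x t - wave n x' t) \<le> (r * real q) ^ n * \<bar>x - x'\<bar>"
proof -
  have "wave n x t - wave n x' t = complex_of_real (amp n x - amp n x') * cis (- (lam ^ n * t))"
    unfolding wave_def by (simp add: left_diff_distrib)
  then have "norm (wave n x t - wave n x' t) = \<bar>amp n x - amp n x'\<bar>"
    by (simp add: norm_mult flip: of_real_diff)
  also have "\<dots> = r ^ n * \<bar>sin (real q ^ n * x) - sin (real q ^ n * x')\<bar>"
    unfolding amp_def using r_pos by (simp add: abs_mult flip: right_diff_distrib)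
  also have "\<dots> \<le> r ^ n * (real q ^ n * \<bar>x - x'\<bar>)"
    using abs_sin_diff_le[of "real q ^ n * x" "real q ^ n * x'"] r_pos
    by (intro mult_left_mono) (simp_all add: abs_mult flip: right_diff_distrib)
  finally show ?thesis by (simp add: power_mult_distrib mult.assoc)
qed

lemma norm_head_diff_t_le: "norm (head k x t - head k x t') \<le> lip k * \<bar>t - t'\<bar>"
proof -
  have "norm (head k x t - head k x t') \<le> (\<Sum>n<k. norm (wave n x t - wave n x t'))"
    unfolding head_def by (simp add: norm_sum flip: sum_subtractf)
  also have "\<dots> \<le> (\<Sum>n<k. (r * lam) ^ n) * \<bar>t - t'\<bar>"
    unfolding sum_distrib_right by (intro sum_mono norm_wave_diff_t_le)
  also have "\<dots> \<le> lip k * \<bar>t - t'\<bar>"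
    unfolding lip_def by (intro mult_right_mono geometric_sum_le r_lam_gt_1) simp
  finally show ?thesis .
qed

lemma norm_head_diff_x_le: "norm (head k x t - head k x' t) \<le> lip k * \<bar>x - x'\<bar>"
proof -
  have "norm (head k x t - head k x' t) \<le> (\<Sum>n<k. norm (wave n x t - wave n x' t))"
    unfolding head_def by (simp add: norm_sum flip: sum_subtractf)
  also have "\<dots> \<le> (\<Sum>n<k. (r * lam) ^ n) * \<bar>x - x'\<bar>"
    unfolding sum_distrib_right
  proof (intro sum_mono order_trans[OF norm_wave_diff_x_le] mult_right_mono power_mono)
    show "r * real q \<le> r * lam" for n
      using r_pos q_ge_2_real unfolding lam_def by (simp add: power2_eq_square)
  qed (use r_pos in simp_all)
  also have "\<dots> \<le> lip k * \<bar>x - x'\<bar>"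
    unfolding lip_def by (intro mult_right_mono geometric_sum_le r_lam_gt_1) simp
  finally show ?thesis .
qed

end

lemma box_count_surface_le_if_holder:
  fixes f :: "real \<Rightarrow> real \<Rightarrow> real"
  assumes "a > 0" "b > 0" "C > 0" "\<alpha> \<le> 1"
    and holder: "\<And>\<delta> x t x' t'. 0 < \<delta> \<Longrightarrow> \<delta> \<le> 1 \<Longrightarrow> \<bar>x - x'\<bar> \<le> \<delta> \<Longrightarrow> \<bar>t - t'\<bar> \<le> \<delta>
      \<Longrightarrow> \<bar>f x t - f x' t'\<bar> \<le> C * \<delta> powr \<alpha>"
  obtains C' \<delta>0 where "C' > 0" "\<delta>0 > 0"
    "\<And>\<delta>. 0 < \<delta> \<Longrightarrow> \<delta> < \<delta>0 \<Longrightarrow> finite (meeting_cubes (surface f a b) \<delta>)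
      \<and> real (box_count (surface f a b) \<delta>) \<le> C' * \<delta> powr (\<alpha> - 3)"
proof
  define \<delta>0 where "\<delta>0 = min 1 (min (a / 2) (b / 2))"
  show "4 * a * b * (2 * C + 2) > 0" "\<delta>0 > 0"
    using assms unfolding \<delta>0_def by simp_all
  fix \<delta> :: real assume \<delta>: "0 < \<delta>" "\<delta> < \<delta>0"
  then have "\<delta> \<le> 1" "2 \<le> a / \<delta>" "2 \<le> b / \<delta>"
    unfolding \<delta>0_def by (simp_all add: field_simps)
  have powr_ge_1: "1 \<le> \<delta> powr (\<alpha> - 1)"
    using powr_mono'[of "\<alpha> - 1" 0 \<delta>] \<delta> \<open>\<delta> \<le> 1\<close> assms(4) by simp
  have "finite (meeting_cubes (surface f a b) \<delta>)
      \<and> real (box_count (surface f a b) \<delta>) \<le> (a / \<delta> + 2) * (b / \<delta> + 2) * (2 * (C * \<delta> powr \<alpha>) / \<delta> + 2)"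
    using box_count_graph_le[of \<delta> a b "C * \<delta> powr \<alpha>" f] \<delta> \<open>\<delta> \<le> 1\<close> assms holder by auto
  moreover have "(a / \<delta> + 2) * (b / \<delta> + 2) * (2 * (C * \<delta> powr \<alpha>) / \<delta> + 2)
      \<le> (2 * a / \<delta>) * (2 * b / \<delta>) * ((2 * C + 2) * \<delta> powr (\<alpha> - 1))"
  proof (intro mult_mono)
    have "2 * (C * \<delta> powr \<alpha>) / \<delta> = 2 * C * \<delta> powr (\<alpha> - 1)"
      using \<delta> by (simp add: powr_diff)
    then show "2 * (C * \<delta> powr \<alpha>) / \<delta> + 2 \<le> (2 * C + 2) * \<delta> powr (\<alpha> - 1)"
      using powr_ge_1 by (simp add: algebra_simps)
  qed (use \<open>2 \<le> a / \<delta>\<close> \<open>2 \<le> b / \<delta>\<close> \<delta> assms in simp_all)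
  moreover have "(2 * a / \<delta>) * (2 * b / \<delta>) * ((2 * C + 2) * \<delta> powr (\<alpha> - 1))
      = 4 * a * b * (2 * C + 2) * \<delta> powr (\<alpha> - 3)"
    using \<delta> by (simp add: powr_diff powr_numeral power3_eq_cube field_simps)
  ultimately show "finite (meeting_cubes (surface f a b) \<delta>)
      \<and> real (box_count (surface f a b) \<delta>) \<le> 4 * a * b * (2 * C + 2) * \<delta> powr (\<alpha> - 3)"
    by linarith
qed

context lacunary_wave
begin

lemma norm_F_diff_le:
  assumes "lam ^ K * \<delta> \<le> 1" "\<bar>x - x'\<bar> \<le> \<delta>" "\<bar>t - t'\<bar> \<le> \<delta>"
  shows "norm (F x t - F x' t') \<le> r ^ K * (2 / (r * lam - 1) + 2 / (1 - r))"
proof -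
  have lip_nonneg: "lip K \<ge> 0" unfolding lip_def using r_lam_gt_1 by simp
  have "lip K * \<delta> = r ^ K * (lam ^ K * \<delta>) / (r * lam - 1)"
    unfolding lip_def by (simp add: power_mult_distrib)
  also have "\<dots> \<le> r ^ K / (r * lam - 1)"
    using assms(1) r_pos r_lam_gt_1 by (intro divide_right_mono mult_left_le) auto
  finally have lip_\<delta>: "lip K * \<delta> \<le> r ^ K / (r * lam - 1)" .
  have "norm (head K x t - head K x' t') \<le> norm (head K x t - head K x t') + norm (head K x t' - head K x' t')"
    by (rule norm_diff_triangle_le[OF order_refl order_refl])
  also have "\<dots> \<le> lip K * \<delta> + lip K * \<delta>"
    using norm_head_diff_t_le[of K x t t'] norm_head_diff_x_le[of K x t' x'] assms(2,3) lip_nonneg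
    by (meson add_mono mult_left_mono order_trans)
  finally have "norm (head K x t - head K x' t') \<le> 2 * (r ^ K / (r * lam - 1))"
    using lip_\<delta> by linarith
  moreover have F_diff: "F x t - F x' t' = (head K x t - head K x' t') + tail K x t - tail K x' t'"
    using F_eq_head_plus_tail[of x t K] F_eq_head_plus_tail[of x' t' K] by simp
  ultimately have "norm (F x t - F x' t') \<le> 2 * (r ^ K / (r * lam - 1)) + r ^ K / (1 - r) + r ^ K / (1 - r)"
    unfolding F_diff using norm_tail_le[of K x t] norm_tail_le[of K x' t']
      norm_triangle_ineq4[of "head K x t - head K x' t' + tail K x t" "tail K x' t'"]
      norm_triangle_ineq[of "head K x t - head K x' t'" "tail K x t"]
    by linarith
  then show ?thesis by (simp add: field_simps)
qed

lemma r_power_le_powr: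
  assumes "\<delta> > 0" "1 / \<delta> < lam ^ Suc K"
  shows "r ^ K \<le> lam powr (1 - s / 2) * \<delta> powr (1 - s / 2)"
proof -
  have "1 / (lam * \<delta>) \<le> lam ^ K"
    using assms lam_pos by (simp add: field_simps)
  then have "(lam ^ K) powr (-(1 - s / 2)) \<le> (1 / (lam * \<delta>)) powr (-(1 - s / 2))"
    using assms lam_pos s_less_2 by (intro powr_mono2') auto
  also have "\<dots> = 1 / ((lam * \<delta>) powr (-(1 - s / 2)))"
    by (simp only: powr_divide powr_one_eq_one)
  also have "\<dots> = lam powr (1 - s / 2) * \<delta> powr (1 - s / 2)"
    by (simp only: powr_minus divide_inverse inverse_inverse_eq mult_1 powr_mult)
  finally show ?thesis unfolding r_power_eq_powr .
qed

lemma Prob_holder: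
  obtains C where "C > 0"
    "\<And>\<delta> x t x' t'. 0 < \<delta> \<Longrightarrow> \<delta> \<le> 1 \<Longrightarrow> \<bar>x - x'\<bar> \<le> \<delta> \<Longrightarrow> \<bar>t - t'\<bar> \<le> \<delta>
      \<Longrightarrow> \<bar>Prob q s x t - Prob q s x' t'\<bar> \<le> C * \<delta> powr (1 - s / 2)"
proof
  define C0 where "C0 = 2 / (r * lam - 1) + 2 / (1 - r)"
  have C0: "C0 > 0" unfolding C0_def using r_lam_gt_1 r_less_1 by (intro add_pos_pos divide_pos_pos) auto
  show "(norm_const q s)\<^sup>2 * (C0 * (2 / (1 - r))) * lam powr (1 - s / 2) > 0"
    using norm_const_pos C0 r_less_1 lam_pos by simp
  fix \<delta> x t x' t' :: real
  assume \<delta>: "0 < \<delta>" "\<delta> \<le> 1" and close: "\<bar>x - x'\<bar> \<le> \<delta>" "\<bar>t - t'\<bar> \<le> \<delta>"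
  obtain K where K: "lam ^ K \<le> 1 / \<delta>" "1 / \<delta> < lam ^ Suc K"
    using exists_power_bracket[of lam "1 / \<delta>"] lam_ge_4 \<delta> by auto
  have "lam ^ K * \<delta> \<le> 1" using K(1) \<delta> by (simp add: field_simps)
  then have "norm (F x t - F x' t') \<le> r ^ K * C0"
    using norm_F_diff_le[OF _ close] unfolding C0_def by blast
  moreover have "norm (F x t) + norm (F x' t') \<le> 2 / (1 - r)"
    using norm_F_le[of x t] norm_F_le[of x' t'] by simp
  ultimately have prod: "norm (F x t - F x' t') * (norm (F x t) + norm (F x' t')) \<le> (r ^ K * C0) * (2 / (1 - r))"
    using r_pos C0 by (intro mult_mono) auto
  have "\<bar>Prob q s x t - Prob q s x' t'\<bar> = (norm_const q s)\<^sup>2 * \<bar>(norm (F x t))\<^sup>2 - (norm (F x' t'))\<^sup>2\<bar>"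
    by (simp add: Prob_eq abs_mult flip: right_diff_distrib)
  also have "\<dots> \<le> (norm_const q s)\<^sup>2 * ((r ^ K * C0) * (2 / (1 - r)))"
    by (intro mult_left_mono order_trans[OF abs_norm_sq_diff_le prod]) simp
  also have "\<dots> \<le> (norm_const q s)\<^sup>2 * ((lam powr (1 - s / 2) * \<delta> powr (1 - s / 2) * C0) * (2 / (1 - r)))"
    using r_power_le_powr[OF \<delta>(1) K(2)] C0 r_less_1 by (intro mult_left_mono mult_right_mono) auto
  finally show "\<bar>Prob q s x t - Prob q s x' t'\<bar>
      \<le> (norm_const q s)\<^sup>2 * (C0 * (2 / (1 - r))) * lam powr (1 - s / 2) * \<delta> powr (1 - s / 2)"
    by (simp add: mult_ac)
qed

lemma continuous_on_Prob: "continuous_on S (Prob q s x)"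
proof -
  obtain C where "C > 0" and holder: "\<And>\<delta> x t x' t'. 0 < \<delta> \<Longrightarrow> \<delta> \<le> 1 \<Longrightarrow> \<bar>x - x'\<bar> \<le> \<delta>
      \<Longrightarrow> \<bar>t - t'\<bar> \<le> \<delta> \<Longrightarrow> \<bar>Prob q s x t - Prob q s x' t'\<bar> \<le> C * \<delta> powr (1 - s / 2)"
    using Prob_holder by blast
  show ?thesis
    using \<open>C > 0\<close> s_less_2 holder[of _ x x] by (intro continuous_on_if_holder[of C "1 - s / 2"]) auto
qed

lemma box_count_Prob_upper:
  assumes "T > 0"
  obtains C \<delta>0 where "C > 0" "\<delta>0 > 0"
    "\<And>\<delta>. 0 < \<delta> \<Longrightarrow> \<delta> < \<delta>0 \<Longrightarrow> finite (meeting_cubes (surface (Prob q s) pi T) \<delta>)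
      \<and> real (box_count (surface (Prob q s) pi T) \<delta>) \<le> C * \<delta> powr (-(2 + s / 2))"
proof -
  obtain C where "C > 0" and holder: "\<And>\<delta> x t x' t'. 0 < \<delta> \<Longrightarrow> \<delta> \<le> 1 \<Longrightarrow> \<bar>x - x'\<bar> \<le> \<delta>
      \<Longrightarrow> \<bar>t - t'\<bar> \<le> \<delta> \<Longrightarrow> \<bar>Prob q s x t - Prob q s x' t'\<bar> \<le> C * \<delta> powr (1 - s / 2)"
    using Prob_holder by blast
  have "1 - s / 2 \<le> 1" using s_pos by simp
  from box_count_surface_le_if_holder[where f = "Prob q s", OF pi_gt_zero assms \<open>C > 0\<close> this holder]
  obtain C' \<delta>0 where "C' > 0" "\<delta>0 > 0" "\<And>\<delta>. 0 < \<delta> \<Longrightarrow> \<delta> < \<delta>0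
      \<Longrightarrow> finite (meeting_cubes (surface (Prob q s) pi T) \<delta>)
        \<and> real (box_count (surface (Prob q s) pi T) \<delta>) \<le> C' * \<delta> powr (1 - s / 2 - 3)"
    by blast
  moreover have "1 - s / 2 - 3 = -(2 + s / 2)" by simp
  ultimately show ?thesis using that by metis
qed

end

lemma abs_diff_power_le:
  fixes a b :: real
  assumes "0 \<le> a" "0 \<le> b"
  shows "\<bar>a - b\<bar> ^ M \<le> a ^ M + b ^ M"
proof -
  have "\<bar>a - b\<bar> ^ M \<le> (max a b) ^ M" using assms by (intro power_mono) auto
  also have "\<dots> \<le> a ^ M + b ^ M" using assms by (auto simp: max_def)
  finally show ?thesis .
qed

lemma double_sum_symmetric:
  fixes a A :: "nat \<Rightarrow> 'a::comm_semiring_1"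
  shows "(\<Sum>n<k. \<Sum>m<k. a n * a m * (A n + A m)) = 2 * (\<Sum>m<k. a m) * (\<Sum>n<k. a n * A n)"
proof -
  have "(\<Sum>n<k. \<Sum>m<k. a n * a m * A m) = (\<Sum>n<k. \<Sum>m<k. a n * a m * A n)"
    by (subst sum.swap) (simp add: mult_ac)
  moreover have "(\<Sum>m<k. a m) * (\<Sum>n<k. a n * A n) = (\<Sum>n<k. \<Sum>m<k. a n * a m * A n)"
    by (subst sum.swap) (simp add: sum_product mult_ac)
  ultimately show ?thesis
    by (simp add: distrib_left distrib_right sum.distrib mult_2)
qed

lemma mult_cnj_sum3:
  fixes a b c :: complex
  shows "(a + b + c) * cnj (a + b + c) = a * cnj a + b * cnj b + c * cnj c
    + (a * cnj b + cnj (a * cnj b)) + (cnj c * a + cnj (cnj c * a)) + (cnj c * b + cnj (cnj c * b))"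
  by (simp add: algebra_simps)

lemma norm_add_cnj: "norm (z + cnj z) = 2 * \<bar>Re z\<bar>"
  by (simp add: complex_add_cnj norm_mult)

lemma norm_add4_ge:
  fixes a b c d :: "'a::real_normed_vector"
  shows "norm b - norm a - norm c - norm d \<le> norm (a + b + c + d)"
  using norm_triangle_ineq4[of "a + b + c + d" a] norm_triangle_ineq4[of "b + c + d" c]
    norm_triangle_ineq4[of "b + d" d]
  by (simp add: algebra_simps)

lemma norm_plus_cnj_le_twice: "norm (z + cnj z) \<le> 2 * norm z"
  using norm_triangle_ineq[of z "cnj z"] by simp

lemma abs_Re_ge: "\<bar>Re b\<bar> - norm (a - b) \<le> \<bar>Re a\<bar>"
  using abs_Re_le_cmod[of "a - b"] by simp

context lacunary_wave
begin

lemma wave_eq_cis: "wave n x = (\<lambda>u. complex_of_real (amp n x) * cis (- (lam ^ n) * u))"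
  unfolding wave_def by (simp add: fun_eq_iff)

lemma head_eq_sum_cis: "head k x = (\<lambda>u. \<Sum>n<k. complex_of_real (amp n x) * cis (- (lam ^ n) * u))"
  unfolding head_def wave_eq_cis ..

lemma cnj_wave: "cnj (wave n x u) = complex_of_real (amp n x) * cis (lam ^ n * u)"
  unfolding wave_def by (simp add: cis_cnj)

lemma wave_mult_cnj: "wave n x u * cnj (wave n x u) = complex_of_real ((amp n x)\<^sup>2)"
  unfolding cnj_wave unfolding wave_def by (simp add: cis_mult power2_eq_square mult_ac)

lemma tail_periodic:
  assumes "h = 2 * pi / (real q * lam ^ k)"
  shows "tail (Suc k) x (u + h) = tail (Suc k) x u"
proof -
  have "wave (n + Suc k) x (u + h) = wave (n + Suc k) x u" for n
  proof -
    have lam_Suc: "lam ^ Suc n = real q * real q ^ (2 * n + 1)"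
      unfolding lam_def power_mult[symmetric] by simp
    have "lam ^ (n + Suc k) * h = lam ^ k * lam ^ Suc n * h"
      by (simp add: power_add mult_ac)
    also have "\<dots> = (real q * lam ^ k * h) * real q ^ (2 * n + 1)"
      unfolding lam_Suc by (simp only: mult_ac)
    also have "\<dots> = 2 * pi * real (q ^ (2 * n + 1))"
      using assms q_ge_2_real lam_pos by simp
    finally have "lam ^ (n + Suc k) * h = 2 * pi * real (q ^ (2 * n + 1))" .
    then have "cis (- (lam ^ (n + Suc k) * h)) = 1"
      using cis_multiple_2pi[of "- real (q ^ (2 * n + 1))"] by (simp add: Ints_minus)
    moreover have "cis (- (lam ^ (n + Suc k) * (u + h)))
        = cis (- (lam ^ (n + Suc k) * u)) * cis (- (lam ^ (n + Suc k) * h))"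
      by (simp add: cis_mult distrib_left)
    ultimately show ?thesis unfolding wave_def by simp
  qed
  then show ?thesis unfolding tail_def by simp
qed

lemma norm_fdiff_head_le: "norm (fdiff M h (head k x) t) \<le> (\<Sum>n<k. r ^ n * (lam ^ n * \<bar>h\<bar>) ^ M)"
proof -
  have "norm (fdiff M h (head k x) t)
      \<le> (\<Sum>n<k. norm (complex_of_real (amp n x) * ((cis (- (lam ^ n) * h) - 1) ^ M * cis (- (lam ^ n) * t))))"
    unfolding head_eq_sum_cis fdiff_sum fdiff_cmult fdiff_cis by (rule norm_sum)
  also have "\<dots> \<le> (\<Sum>n<k. r ^ n * (lam ^ n * \<bar>h\<bar>) ^ M)"
  proof (intro sum_mono)
    fix n
    have "norm (cis (- (lam ^ n) * h) - 1) \<le> lam ^ n * \<bar>h\<bar>"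
      using norm_cis_diff_le[of "- (lam ^ n) * h" 0] lam_pos by (simp add: abs_mult)
    then show "norm (complex_of_real (amp n x) * ((cis (- (lam ^ n) * h) - 1) ^ M * cis (- (lam ^ n) * t)))
        \<le> r ^ n * (lam ^ n * \<bar>h\<bar>) ^ M"
      using abs_amp_le[of n x] by (simp add: norm_mult norm_power mult_mono power_mono)
  qed
  finally show ?thesis .
qed

lemma norm_fdiff_wave_le: "norm (fdiff M h (wave k x) t) \<le> r ^ k * 2 ^ M"
proof -
  have "fdiff M h (wave k x) t = complex_of_real (amp k x) * ((cis (- (lam ^ k) * h) - 1) ^ M * cis (- (lam ^ k) * t))"
    unfolding wave_eq_cis fdiff_cmult fdiff_cis ..
  then show ?thesis
    using abs_amp_le[of k x] power_mono[OF norm_cis_minus_one_le[of "- (lam ^ k) * h"], of M]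
    by (simp add: norm_mult norm_power mult_mono)
qed

lemma head_mult_cnj:
  "head k x u * cnj (head k x u)
    = (\<Sum>n<k. \<Sum>m<k. complex_of_real (amp n x * amp m x) * cis ((lam ^ m - lam ^ n) * u))"
  unfolding head_eq_sum_cis cnj_sum sum_product
  by (intro sum.cong refl) (simp add: cis_cnj cis_mult algebra_simps)

lemma norm_fdiff_head_sq_le:
  "norm (fdiff M h (\<lambda>u. head k x u * cnj (head k x u)) t)
    \<le> 2 / (1 - r) * (\<Sum>n<k. r ^ n * (lam ^ n * \<bar>h\<bar>) ^ M)"
proof -
  define A where "A n = (lam ^ n * \<bar>h\<bar>) ^ M" for n
  have term_le: "norm (complex_of_real (amp n x * amp m x) * ((cis ((lam ^ m - lam ^ n) * h) - 1) ^ M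
      * cis ((lam ^ m - lam ^ n) * t))) \<le> r ^ n * r ^ m * (A n + A m)" for n m
  proof -
    have "norm (cis ((lam ^ m - lam ^ n) * h) - 1) ^ M \<le> \<bar>lam ^ m * \<bar>h\<bar> - lam ^ n * \<bar>h\<bar>\<bar> ^ M"
      using norm_cis_diff_le[of "(lam ^ m - lam ^ n) * h" 0]
      by (intro power_mono) (simp_all add: abs_mult flip: left_diff_distrib)
    also have "\<dots> \<le> A n + A m"
      unfolding A_def using lam_pos by (subst add.commute) (intro abs_diff_power_le; simp)
    finally show ?thesis
      using abs_amp_le[of n x] abs_amp_le[of m x] r_pos
      by (simp add: norm_mult norm_power abs_mult mult_mono)
  qed
  have "norm (fdiff M h (\<lambda>u. head k x u * cnj (head k x u)) t) \<le> (\<Sum>n<k. \<Sum>m<k. r ^ n * r ^ m * (A n + A m))"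
    unfolding head_mult_cnj fdiff_sum fdiff_cmult fdiff_cis
    by (intro order_trans[OF norm_sum] sum_mono order_trans[OF norm_sum] term_le)
  also have "\<dots> = 2 * (\<Sum>m<k. r ^ m) * (\<Sum>n<k. r ^ n * A n)"
    by (rule double_sum_symmetric)
  also have "\<dots> \<le> 2 * (1 / (1 - r)) * (\<Sum>n<k. r ^ n * A n)"
    using geometric_sum_le_inverse[of r k] r_pos r_less_1 lam_pos
    by (intro mult_right_mono mult_left_mono sum_nonneg) (auto simp: A_def)
  finally show ?thesis unfolding A_def by simp
qed

end

context lacunary_wave
begin

definition chord :: real where "chord = 2 * sin (pi / real q)"

lemma sin_pi_div_q_pos: "sin (pi / real q) > 0"
  using sin_pi_divide_n_gt_0[of q] q_ge_2 by simp

lemma chord_pos: "chord > 0"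
  unfolding chord_def using sin_pi_div_q_pos by simp

lemma norm_cis_step_minus_one:
  assumes "h = 2 * pi / (real q * lam ^ k)"
  shows "norm (cis (lam ^ k * h) - 1) = chord"
proof -
  have "lam ^ k * h = 2 * pi / real q"
    using assms lam_pos q_ge_2_real by (simp add: field_simps)
  then show ?thesis
    unfolding norm_cis_minus_one chord_def using sin_pi_div_q_pos by simp
qed

lemma two_pi_less_chord_mult_cube: "2 * pi < chord * real q ^ 3"
proof -
  define y where "y = pi / real q"
  have y: "0 < y" "y < 2"
    unfolding y_def using q_ge_2_real pi_less_4 by (auto simp: field_simps)
  then have "y ^ 3 / 6 < 2 * y / 3"
    using mult_strict_mono[of y 2 y 2] by (simp add: power3_eq_cube field_simps)
  then have "y / 3 < sin y"
    using sin_ge_cubic[of y] y by linarith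
  moreover have "chord = 2 * sin y" unfolding chord_def y_def ..
  ultimately have "2 * (y / 3) * real q ^ 3 < chord * real q ^ 3"
    using q_ge_2_real by (intro mult_strict_right_mono) auto
  moreover have "2 * (y / 3) * real q ^ 3 = 2 * pi * ((real q)\<^sup>2 / 3)"
    unfolding y_def using q_ge_2_real by (simp add: power2_eq_square power3_eq_cube)
  moreover have "1 < (real q)\<^sup>2 / 3"
    using power_mono[OF q_ge_2_real, of 2] by simp
  then have "2 * pi * 1 < 2 * pi * ((real q)\<^sup>2 / 3)"
    by (intro mult_strict_left_mono) auto
  ultimately show ?thesis by linarith
qed

lemma wave_at_pi_div_q: "n \<ge> 1 \<Longrightarrow> wave n (pi / real q) t = 0"
proof -
  assume "n \<ge> 1"
  then obtain m where "n = Suc m" by (cases n) auto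
  then have "real q ^ n * (pi / real q) = real (q ^ m) * pi"
    using q_ge_2_real by simp
  then have "sin (real q ^ n * (pi / real q)) = 0"
    by (simp only: sin_npi)
  then show ?thesis unfolding wave_def amp_def by simp
qed

lemma norm_F_at_pi_div_q: "norm (F (pi / real q) t) = sin (pi / real q)"
proof -
  have "F (pi / real q) t = wave 0 (pi / real q) t"
    unfolding F_def by (subst suminf_finite[of "{0}"]) (auto simp: wave_at_pi_div_q)
  then show ?thesis
    using sin_pi_div_q_pos by (simp add: norm_wave amp_def)
qed

lemma head_lower_bound:
  obtains \<eta> c1 K1 where "0 < \<eta>" "\<eta> \<le> pi / (2 * real q)" "0 < c1"
    "\<And>k x t. K1 \<le> k \<Longrightarrow> \<bar>x - pi / real q\<bar> \<le> \<eta> \<Longrightarrow> c1 \<le> norm (head k x t)"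
proof -
  define \<sigma> where "\<sigma> = sin (pi / real q)"
  have "\<sigma> > 0" unfolding \<sigma>_def by (rule sin_pi_div_q_pos)
  have "\<forall>\<^sub>F K in sequentially. r ^ K * (2 / (r * lam - 1) + 2 / (1 - r)) \<le> \<sigma> / 4
      \<and> r ^ K * (1 / (1 - r)) \<le> \<sigma> / 4"
    using \<open>\<sigma> > 0\<close> r_pos r_less_1 by (intro eventually_conj eventually_power_mult_le) auto
  then obtain K1 where K1: "r ^ K1 * (2 / (r * lam - 1) + 2 / (1 - r)) \<le> \<sigma> / 4"
    "r ^ K1 * (1 / (1 - r)) \<le> \<sigma> / 4"
    unfolding eventually_sequentially by blast
  define \<eta> where "\<eta> = min (pi / (2 * real q)) (1 / lam ^ K1)"
  have "\<sigma> / 2 \<le> norm (head k x t)" if "K1 \<le> k" "\<bar>x - pi / real q\<bar> \<le> \<eta>" for k x t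
  proof -
    define D where "D = F x t - F (pi / real q) t"
    have "0 \<le> \<eta>" using that(2) by linarith
    have "\<eta> \<le> 1 / lam ^ K1" unfolding \<eta>_def by simp
    then have "lam ^ K1 * \<eta> \<le> 1"
      using lam_pos by (simp add: pos_le_divide_eq mult.commute)
    then have "norm D \<le> r ^ K1 * (2 / (r * lam - 1) + 2 / (1 - r))"
      unfolding D_def using norm_F_diff_le[of K1 \<eta> x "pi / real q" t t] that(2) \<open>0 \<le> \<eta>\<close> by simp
    then have D: "norm D \<le> \<sigma> / 4"
      using K1(1) by linarith
    have "r ^ k \<le> r ^ K1"
      using that(1) r_pos r_less_1 by simp
    then have "r ^ k / (1 - r) \<le> r ^ K1 / (1 - r)"
      using r_less_1 by (intro divide_right_mono) auto
    moreover have "r ^ K1 / (1 - r) \<le> \<sigma> / 4"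
      using K1(2) by simp
    ultimately have tail: "norm (tail k x t) \<le> \<sigma> / 4"
      using norm_tail_le[of k x t] by linarith
    have "F (pi / real q) t = head k x t + tail k x t - D"
      unfolding D_def using F_eq_head_plus_tail[of x t k] by simp
    then have "\<sigma> = norm (head k x t + tail k x t - D)"
      using norm_F_at_pi_div_q[of t] unfolding \<sigma>_def by simp
    then have "\<sigma> \<le> norm (head k x t) + norm (tail k x t) + norm D"
      using norm_triangle_ineq4[of "head k x t + tail k x t" D]
        norm_triangle_ineq[of "head k x t" "tail k x t"] by linarith
    then show ?thesis
      using D tail by linarith
  qed
  moreover have "0 < \<eta>" "\<eta> \<le> pi / (2 * real q)"
    unfolding \<eta>_def using lam_pos q_ge_2_real by auto
  ultimately show ?thesis
    using that[of \<eta> "\<sigma> / 2" K1] \<open>\<sigma> > 0\<close> by auto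
qed

lemma exists_fdiff_order:
  assumes "c1 > 0"
  obtains M where "M \<ge> 1" "1 < r * lam ^ M"
    "2 / (1 - r) * ((2 * pi / real q) ^ M / (r * lam ^ M - 1)) \<le> chord ^ M * c1 / 8"
proof -
  define \<rho> where "\<rho> = (2 * pi / real q) / (lam * chord)"
  have "0 < \<rho>"
    unfolding \<rho>_def using lam_pos chord_pos q_ge_2_real by simp
  moreover have "\<rho> < 1"
    unfolding \<rho>_def using two_pi_less_chord_mult_cube lam_pos chord_pos q_ge_2_real
    by (simp add: lam_def power2_eq_square power3_eq_cube field_simps)
  ultimately have "\<forall>\<^sub>F M in sequentially. \<rho> ^ M * 1 \<le> c1 * r * (1 - r) / 32 \<and> 2 / r < lam ^ M \<and> 1 \<le> M"
    using assms r_pos r_less_1 lam_ge_4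
    by (intro eventually_conj eventually_power_mult_le eventually_power_gt eventually_ge_at_top) auto
  then obtain M where M: "\<rho> ^ M \<le> c1 * r * (1 - r) / 32" "2 / r < lam ^ M" "1 \<le> M"
    unfolding eventually_sequentially by auto
  have rlM: "2 < r * lam ^ M" using M(2) r_pos by (simp add: field_simps)
  have "(2 * pi / real q) ^ M = \<rho> ^ M * chord ^ M * lam ^ M"
    unfolding \<rho>_def using lam_pos chord_pos by (simp add: power_mult_distrib power_divide)
  then have "2 / (1 - r) * ((2 * pi / real q) ^ M / (r * lam ^ M - 1))
      = 2 / (1 - r) * \<rho> ^ M * chord ^ M * (lam ^ M / (r * lam ^ M - 1))"
    by simp
  also have "\<dots> \<le> 2 / (1 - r) * \<rho> ^ M * chord ^ M * (2 / r)"
  proof (intro mult_left_mono)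
    show "lam ^ M / (r * lam ^ M - 1) \<le> 2 / r"
      using rlM r_pos by (simp add: field_simps)
  qed (use \<open>0 < \<rho>\<close> r_less_1 chord_pos in simp)
  also have "\<dots> \<le> 2 / (1 - r) * (c1 * r * (1 - r) / 32) * chord ^ M * (2 / r)"
    using M(1) r_pos r_less_1 chord_pos by (intro mult_right_mono mult_left_mono) auto
  also have "\<dots> = chord ^ M * c1 / 8"
    using r_pos r_less_1 by (simp add: field_simps)
  finally show ?thesis
    using that M(3) rlM by simp
qed

end

context lacunary_wave
begin

lemma fdiff_norm_sq_F_eq:
  assumes "M \<ge> 1" "h = 2 * pi / (real q * lam ^ k)"
  shows "fdiff M h (\<lambda>u. F x u * cnj (F x u)) t
    = fdiff M h (\<lambda>u. head k x u * cnj (head k x u)) t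
      + (complex_of_real (amp k x) * fdiff M h (\<lambda>u. head k x u * cis (lam ^ k * u)) t
        + cnj (complex_of_real (amp k x) * fdiff M h (\<lambda>u. head k x u * cis (lam ^ k * u)) t))
      + (cnj (tail (Suc k) x t) * fdiff M h (head k x) t
        + cnj (cnj (tail (Suc k) x t) * fdiff M h (head k x) t))
      + (cnj (tail (Suc k) x t) * fdiff M h (wave k x) t
        + cnj (cnj (tail (Suc k) x t) * fdiff M h (wave k x) t))"
proof -
  have periodic: "cnj (tail (Suc k) x (u + h)) = cnj (tail (Suc k) x u)" for u
    using tail_periodic[OF assms(2)] by simp
  have "fdiff M h (\<lambda>u. complex_of_real ((amp k x)\<^sup>2)) t = 0"
    using fdiff_const[OF assms(1)] .
  moreover have "fdiff M h (\<lambda>u. tail (Suc k) x u * cnj (tail (Suc k) x u)) t = 0"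
    using tail_periodic[OF assms(2)] by (intro fdiff_periodic[OF _ assms(1)]) simp
  moreover have "(\<lambda>u. head k x u * cnj (wave k x u))
      = (\<lambda>u. complex_of_real (amp k x) * (head k x u * cis (lam ^ k * u)))"
    by (simp add: cnj_wave fun_eq_iff mult_ac)
  ultimately show ?thesis
    unfolding F_eq_head_wave_tail[of x _ k] mult_cnj_sum3 wave_mult_cnj
    by (simp only: fdiff_add fdiff_cnj fdiff_periodic_mult[where g = "\<lambda>u. cnj (tail (Suc k) x u)", OF periodic])
      (simp add: fdiff_cmult)
qed

lemma norm_fdiff_norm_sq_F_ge:
  assumes "M \<ge> 1" "h = 2 * pi / (real q * lam ^ k)"
  defines "S \<equiv> (\<Sum>n<k. r ^ n * (lam ^ n * \<bar>h\<bar>) ^ M)"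
  shows "2 * \<bar>amp k x\<bar> * \<bar>Re (fdiff M h (\<lambda>u. head k x u * cis (lam ^ k * u)) t)\<bar>
      - 2 / (1 - r) * S - 2 * (r ^ Suc k / (1 - r)) * (S + r ^ k * 2 ^ M)
    \<le> norm (fdiff M h (\<lambda>u. F x u * cnj (F x u)) t)"
proof -
  let ?X = "complex_of_real (amp k x) * fdiff M h (\<lambda>u. head k x u * cis (lam ^ k * u)) t"
  let ?Y = "cnj (tail (Suc k) x t) * fdiff M h (head k x) t"
  let ?V = "cnj (tail (Suc k) x t) * fdiff M h (wave k x) t"
  have "norm ?Y \<le> r ^ Suc k / (1 - r) * S"
    unfolding S_def norm_mult complex_mod_cnj
    using r_pos r_less_1 by (intro mult_mono norm_tail_le norm_fdiff_head_le) auto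
  then have "norm (?Y + cnj ?Y) \<le> 2 * (r ^ Suc k / (1 - r) * S)"
    using norm_plus_cnj_le_twice[of ?Y] by linarith
  have "norm ?V \<le> r ^ Suc k / (1 - r) * (r ^ k * 2 ^ M)"
    unfolding norm_mult complex_mod_cnj
    using r_pos r_less_1 by (intro mult_mono norm_tail_le norm_fdiff_wave_le) auto
  then have "norm (?V + cnj ?V) \<le> 2 * (r ^ Suc k / (1 - r) * (r ^ k * 2 ^ M))"
    using norm_plus_cnj_le_twice[of ?V] by linarith
  moreover note \<open>norm (?Y + cnj ?Y) \<le> 2 * (r ^ Suc k / (1 - r) * S)\<close>
  moreover have "norm (?X + cnj ?X) = 2 * \<bar>amp k x\<bar> * \<bar>Re (fdiff M h (\<lambda>u. head k x u * cis (lam ^ k * u)) t)\<bar>"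
    unfolding norm_add_cnj by (simp add: abs_mult)
  moreover have "norm (fdiff M h (\<lambda>u. head k x u * cnj (head k x u)) t) \<le> 2 / (1 - r) * S"
    unfolding S_def by (rule norm_fdiff_head_sq_le)
  ultimately show ?thesis
    unfolding fdiff_norm_sq_F_eq[OF assms(1,2), of x t]
    using norm_add4_ge[where a = "fdiff M h (\<lambda>u. head k x u * cnj (head k x u)) t"
        and b = "?X + cnj ?X" and c = "?Y + cnj ?Y" and d = "?V + cnj ?V"]
    by (simp only: distrib_left)
qed

end

context lacunary_wave
begin

lemma Re_fdiff_head_cis_ge:
  fixes k M :: nat and h :: real
  assumes "h > 0"
  defines "Z \<equiv> norm (cis (lam ^ k * h) - 1)"
  shows "\<exists>t\<in>{\<tau>, \<tau> + pi / (2 * lam ^ k)}.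
    Z ^ M * norm (head k x \<tau>) / 2 - Z ^ M * (lip k * (pi / (2 * lam ^ k))) - 2 ^ M * (lip k * (real M * h))
      \<le> \<bar>Re (fdiff M h (\<lambda>u. head k x u * cis (lam ^ k * u)) t)\<bar>"
proof -
  let ?z = "(cis (lam ^ k * h) - 1) ^ M * head k x \<tau>"
  have lip_nonneg: "lip k \<ge> 0" unfolding lip_def using r_lam_gt_1 by simp
  obtain t where t: "t \<in> {\<tau>, \<tau> + pi / (2 * lam ^ k)}" and phase: "norm ?z / 2 \<le> \<bar>Re (cis (lam ^ k * t) * ?z)\<bar>"
    using exists_quarter_turn_Re_ge[of "lam ^ k" \<tau> ?z] lam_pos by auto
  have "norm (fdiff M h (\<lambda>u. head k x u * cis (lam ^ k * u)) t
      - cis (lam ^ k * t) * (cis (lam ^ k * h) - 1) ^ M * head k x t) \<le> 2 ^ M * (lip k * (real M * h))"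
  proof (rule norm_fdiff_mult_cis_approx)
    fix j assume "j \<le> M"
    then have "lip k * \<bar>t + real j * h - t\<bar> \<le> lip k * (real M * h)"
      using assms(1) lip_nonneg by (intro mult_left_mono) auto
    then show "norm (head k x (t + real j * h) - head k x t) \<le> lip k * (real M * h)"
      using norm_head_diff_t_le[of k x "t + real j * h" t] by linarith
  qed
  moreover have "norm (cis (lam ^ k * t) * (cis (lam ^ k * h) - 1) ^ M * head k x t - cis (lam ^ k * t) * ?z)
      \<le> Z ^ M * (lip k * (pi / (2 * lam ^ k)))"
  proof -
    have "\<bar>t - \<tau>\<bar> \<le> pi / (2 * lam ^ k)" using t lam_pos by auto
    then have "norm (head k x t - head k x \<tau>) \<le> lip k * (pi / (2 * lam ^ k))"
      using norm_head_diff_t_le[of k x t \<tau>] lip_nonneg by (meson mult_left_mono order_trans)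
    then have "Z ^ M * norm (head k x t - head k x \<tau>) \<le> Z ^ M * (lip k * (pi / (2 * lam ^ k)))"
      by (rule mult_left_mono) (simp add: Z_def)
    moreover have "norm (cis (lam ^ k * t) * (cis (lam ^ k * h) - 1) ^ M * head k x t - cis (lam ^ k * t) * ?z)
        = Z ^ M * norm (head k x t - head k x \<tau>)"
      unfolding Z_def by (simp add: norm_mult norm_power flip: right_diff_distrib mult.assoc)
    ultimately show ?thesis by linarith
  qed
  moreover have "norm ?z = Z ^ M * norm (head k x \<tau>)"
    unfolding Z_def by (simp add: norm_mult norm_power)
  ultimately have "Z ^ M * norm (head k x \<tau>) / 2 - Z ^ M * (lip k * (pi / (2 * lam ^ k)))
      - 2 ^ M * (lip k * (real M * h)) \<le> \<bar>Re (fdiff M h (\<lambda>u. head k x u * cis (lam ^ k * u)) t)\<bar>"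
    using phase abs_Re_ge[of "cis (lam ^ k * t) * (cis (lam ^ k * h) - 1) ^ M * head k x t"
        "fdiff M h (\<lambda>u. head k x u * cis (lam ^ k * u)) t"]
      abs_Re_ge[of "cis (lam ^ k * t) * ?z" "cis (lam ^ k * t) * (cis (lam ^ k * h) - 1) ^ M * head k x t"]
    by linarith
  then show ?thesis using t by blast
qed

lemma sum_fdiff_head_bound_le:
  assumes "h = 2 * pi / (real q * lam ^ k)" "1 < r * lam ^ M"
  shows "(\<Sum>n<k. r ^ n * (lam ^ n * \<bar>h\<bar>) ^ M) \<le> r ^ k * ((2 * pi / real q) ^ M / (r * lam ^ M - 1))"
proof -
  have "h > 0" using assms(1) lam_pos q_ge_2_real by simp
  then have "(\<Sum>n<k. r ^ n * (lam ^ n * \<bar>h\<bar>) ^ M) = h ^ M * (\<Sum>n<k. (r * lam ^ M) ^ n)"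
    by (simp add: sum_distrib_left power_mult_distrib mult_ac flip: power_mult)
  also have "\<dots> \<le> h ^ M * ((r * lam ^ M) ^ k / (r * lam ^ M - 1))"
    using \<open>h > 0\<close> assms(2) by (intro mult_left_mono geometric_sum_le) auto
  also have "\<dots> = r ^ k * (lam ^ k * h) ^ M / (r * lam ^ M - 1)"
    by (simp add: power_mult_distrib mult_ac flip: power_mult)
  also have "lam ^ k * h = 2 * pi / real q"
    using assms(1) lam_pos q_ge_2_real by (simp add: field_simps)
  finally show ?thesis by simp
qed

end

context lacunary_wave
begin

lemma lip_mult_step_eq:
  assumes "h = 2 * pi / (real q * lam ^ k)"
  shows "A * (lip k * (pi / (2 * lam ^ k))) + B * (lip k * (real M * h))
    = r ^ k * ((A * (pi / 2) + B * (real M * (2 * pi / real q))) / (r * lam - 1))"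
proof -
  define D where "D = r * lam - 1"
  have "D \<noteq> 0" "lam \<noteq> 0" "real q \<noteq> 0"
    unfolding D_def using r_lam_gt_1 lam_pos q_ge_2_real by auto
  moreover have lip_eq: "lip k = r ^ k * lam ^ k / D"
    unfolding lip_def D_def by (simp add: power_mult_distrib)
  ultimately show ?thesis
    unfolding assms lip_eq D_def[symmetric] by (simp add: field_simps)
qed

lemma fdiff_norm_sq_F_large:
  fixes k M :: nat and c1 x t0 :: real
  defines "C3 \<equiv> (2 * pi / real q) ^ M / (r * lam ^ M - 1)"
    and "C12 \<equiv> (chord ^ M * (pi / 2) + 2 ^ M * (real M * (2 * pi / real q))) / (r * lam - 1)"
  assumes M: "M \<ge> 1" "1 < r * lam ^ M" "2 / (1 - r) * C3 \<le> chord ^ M * c1 / 8"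
    and k: "r ^ k * (C12 + 2 * r / (1 - r) * (C3 + 2 ^ M)) \<le> chord ^ M * c1 / 8"
    and x: "1 / 2 \<le> \<bar>sin (real q ^ k * x)\<bar>" "c1 \<le> norm (head k x t0)"
  shows "\<exists>t\<in>{t0, t0 + pi / (2 * lam ^ k)}.
    r ^ k * (chord ^ M * c1 / 8) \<le> norm (fdiff M (2 * pi / (real q * lam ^ k)) (\<lambda>u. F x u * cnj (F x u)) t)"
proof -
  define h where "h = 2 * pi / (real q * lam ^ k)"
  define Y where "Y = chord ^ M * c1 / 8"
  have "h > 0" unfolding h_def using lam_pos q_ge_2_real by simp
  have C3: "C3 \<ge> 0" and C12: "C12 \<ge> 0"
    unfolding C3_def C12_def using M(2) r_lam_gt_1 q_ge_2_real chord_pos by simp_all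
  have "0 \<le> r ^ k * C12" "0 \<le> r ^ k * (2 * r / (1 - r) * (C3 + 2 ^ M))"
    using C3 C12 r_pos r_less_1 by simp_all
  moreover have "r ^ k * C12 + r ^ k * (2 * r / (1 - r) * (C3 + 2 ^ M)) \<le> Y"
    using k unfolding Y_def distrib_left .
  ultimately have errors: "r ^ k * C12 \<le> Y" "r ^ k * (2 * r / (1 - r) * (C3 + 2 ^ M)) \<le> Y"
    by linarith+
  obtain t where t: "t \<in> {t0, t0 + pi / (2 * lam ^ k)}" and bound: "chord ^ M * norm (head k x t0) / 2
      - (chord ^ M * (lip k * (pi / (2 * lam ^ k))) + 2 ^ M * (lip k * (real M * h)))
        \<le> \<bar>Re (fdiff M h (\<lambda>u. head k x u * cis (lam ^ k * u)) t)\<bar>"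
    using Re_fdiff_head_cis_ge[OF \<open>h > 0\<close>, where k = k and M = M and \<tau> = t0 and x = x] norm_cis_step_minus_one[OF h_def]
    by (auto simp: algebra_simps)
  let ?R = "\<bar>Re (fdiff M h (\<lambda>u. head k x u * cis (lam ^ k * u)) t)\<bar>"
  have "chord ^ M * c1 \<le> chord ^ M * norm (head k x t0)"
    using x(2) chord_pos by (intro mult_left_mono) auto
  then have "chord ^ M * c1 / 2 - r ^ k * C12 \<le> ?R"
    using bound unfolding lip_mult_step_eq[OF h_def] C12_def by linarith
  then have "3 * Y \<le> ?R" using errors(1) unfolding Y_def by simp
  moreover have "r ^ k \<le> 2 * \<bar>amp k x\<bar>"
    unfolding amp_def using mult_left_mono[OF x(1), of "r ^ k"] r_pos by (simp add: abs_mult)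
  moreover have "0 \<le> Y"
    using M(3) C3 r_less_1 unfolding Y_def by (smt (verit) divide_nonneg_pos mult_nonneg_nonneg)
  ultimately have main: "r ^ k * (3 * Y) \<le> 2 * \<bar>amp k x\<bar> * ?R"
    by (intro mult_mono) auto
  have S: "(\<Sum>n<k. r ^ n * (lam ^ n * \<bar>h\<bar>) ^ M) \<le> r ^ k * C3"
    unfolding C3_def by (rule sum_fdiff_head_bound_le[OF h_def M(2)])
  then have "2 / (1 - r) * (\<Sum>n<k. r ^ n * (lam ^ n * \<bar>h\<bar>) ^ M) \<le> 2 / (1 - r) * (r ^ k * C3)"
    using r_less_1 by (intro mult_left_mono) auto
  also have "\<dots> = r ^ k * (2 / (1 - r) * C3)"
    by (simp add: mult_ac)
  also have "\<dots> \<le> r ^ k * Y"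
    using M(3) r_pos unfolding Y_def by (intro mult_left_mono) auto
  finally have "2 / (1 - r) * (\<Sum>n<k. r ^ n * (lam ^ n * \<bar>h\<bar>) ^ M) \<le> r ^ k * Y" .
  moreover have "2 * (r ^ Suc k / (1 - r)) * ((\<Sum>n<k. r ^ n * (lam ^ n * \<bar>h\<bar>) ^ M) + r ^ k * 2 ^ M)
      \<le> r ^ k * Y"
  proof -
    have "2 * (r ^ Suc k / (1 - r)) * ((\<Sum>n<k. r ^ n * (lam ^ n * \<bar>h\<bar>) ^ M) + r ^ k * 2 ^ M)
        \<le> 2 * (r ^ Suc k / (1 - r)) * (r ^ k * C3 + r ^ k * 2 ^ M)"
      using S r_pos r_less_1 by (intro mult_left_mono) auto
    also have "\<dots> = r ^ k * (r ^ k * (2 * r / (1 - r) * (C3 + 2 ^ M)))"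
      by (simp add: field_simps)
    also have "\<dots> \<le> r ^ k * Y"
      using errors(2) r_pos by (intro mult_left_mono) auto
    finally show ?thesis .
  qed
  ultimately have "r ^ k * Y \<le> norm (fdiff M h (\<lambda>u. F x u * cnj (F x u)) t)"
    using norm_fdiff_norm_sq_F_ge[OF M(1) h_def, where x = x and t = t] main by linarith
  then show ?thesis
    using t unfolding h_def Y_def by blast
qed

end

context lacunary_wave
begin

lemma exists_Prob_increment_ge:
  assumes "M \<ge> 1" "E \<le> norm (fdiff M h (\<lambda>u. F x u * cnj (F x u)) t)"
  obtains j where "j \<le> M" "(norm_const q s)\<^sup>2 * (E / 2 ^ M) \<le> \<bar>Prob q s x (t + real j * h) - Prob q s x t\<bar>"
proof -
  obtain j where "j \<le> M"
    and "norm (fdiff M h (\<lambda>u. F x u * cnj (F x u)) t)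
      \<le> 2 ^ M * norm (F x (t + real j * h) * cnj (F x (t + real j * h)) - F x t * cnj (F x t))"
    by (rule exists_increment_ge_fdiff[OF assms(1), of h "\<lambda>u. F x u * cnj (F x u)" t])
  then have j: "E \<le> 2 ^ M * norm (F x (t + real j * h) * cnj (F x (t + real j * h)) - F x t * cnj (F x t))"
    using assms(2) by linarith
  have "norm (F x (t + real j * h) * cnj (F x (t + real j * h)) - F x t * cnj (F x t))
      = \<bar>(norm (F x (t + real j * h)))\<^sup>2 - (norm (F x t))\<^sup>2\<bar>"
    by (simp only: complex_norm_square[symmetric] norm_of_real flip: of_real_diff)
  then have "E / 2 ^ M \<le> \<bar>(norm (F x (t + real j * h)))\<^sup>2 - (norm (F x t))\<^sup>2\<bar>"
    using j by (simp add: pos_divide_le_eq mult.commute)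
  then have "(norm_const q s)\<^sup>2 * (E / 2 ^ M)
      \<le> (norm_const q s)\<^sup>2 * \<bar>(norm (F x (t + real j * h)))\<^sup>2 - (norm (F x t))\<^sup>2\<bar>"
    by (intro mult_left_mono) auto
  also have "\<dots> = \<bar>Prob q s x (t + real j * h) - Prob q s x t\<bar>"
    by (simp add: Prob_eq abs_mult flip: right_diff_distrib)
  finally show ?thesis using that \<open>j \<le> M\<close> by blast
qed

lemma Prob_oscillation_lower:
  obtains \<eta> c W K where "0 < \<eta>" "\<eta> \<le> pi / (2 * real q)" "0 < c" "0 < W"
    "\<And>k x t0. K \<le> k \<Longrightarrow> \<bar>x - pi / real q\<bar> \<le> \<eta> \<Longrightarrow> 1 / 2 \<le> \<bar>sin (real q ^ k * x)\<bar>
      \<Longrightarrow> \<exists>t1\<in>{t0..t0 + W / lam ^ k}. \<exists>t2\<in>{t0..t0 + W / lam ^ k}.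
        c * r ^ k \<le> \<bar>Prob q s x t1 - Prob q s x t2\<bar>"
proof -
  obtain \<eta> c1 K1 where \<eta>: "0 < \<eta>" "\<eta> \<le> pi / (2 * real q)" and "0 < c1"
    and head: "\<And>k x t. K1 \<le> k \<Longrightarrow> \<bar>x - pi / real q\<bar> \<le> \<eta> \<Longrightarrow> c1 \<le> norm (head k x t)"
    using head_lower_bound by blast
  obtain M where M: "M \<ge> 1" "1 < r * lam ^ M"
    "2 / (1 - r) * ((2 * pi / real q) ^ M / (r * lam ^ M - 1)) \<le> chord ^ M * c1 / 8"
    using exists_fdiff_order[OF \<open>0 < c1\<close>] by blast
  define C where "C = (chord ^ M * (pi / 2) + 2 ^ M * (real M * (2 * pi / real q))) / (r * lam - 1)
    + 2 * r / (1 - r) * ((2 * pi / real q) ^ M / (r * lam ^ M - 1) + 2 ^ M)"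
  have "\<forall>\<^sub>F k in sequentially. r ^ k * C \<le> chord ^ M * c1 / 8"
    using r_pos r_less_1 chord_pos \<open>0 < c1\<close> by (intro eventually_power_mult_le) auto
  then obtain K2 where K2: "\<And>k. K2 \<le> k \<Longrightarrow> r ^ k * C \<le> chord ^ M * c1 / 8"
    unfolding eventually_sequentially by blast
  define W where "W = pi / 2 + real M * (2 * pi / real q)"
  define c where "c = (norm_const q s)\<^sup>2 * (chord ^ M * c1 / 8 / 2 ^ M)"
  have "\<exists>t1\<in>{t0..t0 + W / lam ^ k}. \<exists>t2\<in>{t0..t0 + W / lam ^ k}. c * r ^ k \<le> \<bar>Prob q s x t1 - Prob q s x t2\<bar>"
    if k: "max K1 K2 \<le> k" and x: "\<bar>x - pi / real q\<bar> \<le> \<eta>" "1 / 2 \<le> \<bar>sin (real q ^ k * x)\<bar>"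
    for k x t0
  proof -
    define h where "h = 2 * pi / (real q * lam ^ k)"
    have "r ^ k * C \<le> chord ^ M * c1 / 8" "c1 \<le> norm (head k x t0)"
      using K2 head k x(1) by simp_all
    then obtain t where t: "t \<in> {t0, t0 + pi / (2 * lam ^ k)}"
      and big: "r ^ k * (chord ^ M * c1 / 8) \<le> norm (fdiff M h (\<lambda>u. F x u * cnj (F x u)) t)"
      using fdiff_norm_sq_F_large[OF M _ x(2)] unfolding C_def h_def by blast
    obtain j where "j \<le> M"
      and "(norm_const q s)\<^sup>2 * (r ^ k * (chord ^ M * c1 / 8) / 2 ^ M)
        \<le> \<bar>Prob q s x (t + real j * h) - Prob q s x t\<bar>"
      by (rule exists_Prob_increment_ge[OF M(1) big])
    moreover have "c * r ^ k = (norm_const q s)\<^sup>2 * (r ^ k * (chord ^ M * c1 / 8) / 2 ^ M)"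
      unfolding c_def by simp
    moreover have "W / lam ^ k = pi / (2 * lam ^ k) + real M * h"
      unfolding W_def h_def using lam_pos q_ge_2_real by (simp add: field_simps)
    moreover have "h > 0" unfolding h_def using lam_pos q_ge_2_real by simp
    then have "0 \<le> real j * h" "real j * h \<le> real M * h"
      using \<open>j \<le> M\<close> by (simp_all add: mult_right_mono)
    moreover have "0 < pi / (2 * lam ^ k)" using lam_pos by simp
    ultimately have "t \<in> {t0..t0 + W / lam ^ k}" "t + real j * h \<in> {t0..t0 + W / lam ^ k}"
      and "c * r ^ k \<le> \<bar>Prob q s x (t + real j * h) - Prob q s x t\<bar>"
      using t by auto
    then show ?thesis by blast
  qed
  moreover have "0 < c" "0 < W"
    unfolding c_def W_def using norm_const_pos chord_pos \<open>0 < c1\<close> q_ge_2_real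
    by (simp_all add: add_pos_nonneg)
  ultimately show ?thesis using that[of \<eta> c W "max K1 K2"] \<eta> by blast
qed

end

lemma abs_sin_shift_ge_half:
  assumes "pi / 6 \<le> \<theta>" "\<theta> \<le> 5 * pi / 6"
  shows "1 / 2 \<le> \<bar>sin (of_int j * pi + \<theta>)\<bar>"
proof -
  have "sin (of_int j * pi) = 0" using sin_npi_int[of j] by (simp add: mult.commute)
  moreover have "\<bar>cos (of_int j * pi)\<bar> = 1"
    using sin_cos_squared_add[of "of_int j * pi"] \<open>sin (of_int j * pi) = 0\<close>
    by (auto simp: power2_eq_1_iff)
  ultimately have "\<bar>sin (of_int j * pi + \<theta>)\<bar> = \<bar>sin \<theta>\<bar>"
    by (simp add: sin_add abs_mult)
  moreover have "sin (pi / 6) \<le> sin \<theta>"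
  proof (cases "\<theta> \<le> pi / 2")
    case False
    then have "sin (pi / 6) \<le> sin (pi - \<theta>)" using assms by (intro sin_monotone_2pi_le) auto
    then show ?thesis by simp
  qed (use assms in \<open>intro sin_monotone_2pi_le, auto\<close>)
  ultimately show ?thesis by (simp add: sin_30)
qed

lemma card_UN_disjoint_ge:
  assumes "finite J" "\<And>j. j \<in> J \<Longrightarrow> finite (I j)" "disjoint_family_on I J"
    and "\<And>j. j \<in> J \<Longrightarrow> a \<le> real (card (I j))"
  shows "real (card J) * a \<le> real (card (\<Union>j\<in>J. I j))"
proof -
  have "real (card J) * a \<le> (\<Sum>j\<in>J. real (card (I j)))"
    using sum_mono[of J "\<lambda>_. a", OF assms(4)] by (simp add: mult.commute)
  also have "\<dots> = real (card (\<Union>j\<in>J. I j))"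
    using assms(1-3) by (simp add: card_UN_disjoint disjoint_family_on_def flip: of_nat_sum)
  finally show ?thesis .
qed

lemma disjoint_family_sin_windows:
  fixes g :: "int \<Rightarrow> real"
  shows "disjoint_family_on (\<lambda>j::int. {m. of_int j * pi + pi / 6 \<le> g m \<and> g m \<le> of_int j * pi + 5 * pi / 6}) J"
  unfolding disjoint_family_on_def
proof (intro ballI impI)
  fix j j' :: int assume "j \<noteq> j'"
  have sep: "of_int i * pi + 5 * pi / 6 < of_int i' * pi + pi / 6" if "i < i'" for i i' :: int
  proof -
    have "of_int i * pi + pi \<le> of_int i' * pi"
      using that mult_right_mono[of "of_int i + 1" "of_int i'" pi] by (simp add: distrib_right)
    then show ?thesis using pi_gt_zero by linarith
  qed
  show "{m. of_int j * pi + pi / 6 \<le> g m \<and> g m \<le> of_int j * pi + 5 * pi / 6}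
      \<inter> {m. of_int j' * pi + pi / 6 \<le> g m \<and> g m \<le> of_int j' * pi + 5 * pi / 6} = {}"
  proof (cases "j < j'")
    case True
    then show ?thesis using sep[of j j'] by auto
  next
    case False
    then show ?thesis using sep[of j' j] \<open>j \<noteq> j'\<close> by auto
  qed
qed

lemma sin_window_point:
  fixes Q x c \<eta> :: real and j :: int
  assumes "Q > 0" "(c - \<eta>) * Q / pi \<le> of_int j" "of_int j \<le> (c + \<eta>) * Q / pi - 1"
    and "of_int j * pi + pi / 6 \<le> Q * x" "Q * x \<le> of_int j * pi + 5 * pi / 6"
  shows "x \<in> {c - \<eta>..c + \<eta>}" "1 / 2 \<le> \<bar>sin (Q * x)\<bar>"
proof -
  have "of_int j + 1 \<le> (c + \<eta>) * Q / pi" using assms(3) by linarith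
  then have "Q * (c - \<eta>) \<le> of_int j * pi" "(of_int j + 1) * pi \<le> Q * (c + \<eta>)"
    using assms(2) pi_gt_zero by (simp_all add: pos_divide_le_eq pos_le_divide_eq mult.commute)
  then have "Q * (c - \<eta>) \<le> Q * x" "Q * x \<le> Q * (c + \<eta>)"
    using assms(4,5) pi_gt_zero by (simp_all add: distrib_right)
  then show "x \<in> {c - \<eta>..c + \<eta>}"
    using assms(1) by simp
  show "1 / 2 \<le> \<bar>sin (Q * x)\<bar>"
    using abs_sin_shift_ge_half[of "Q * x - of_int j * pi" j] assms(4,5) by simp
qed

lemma separated_points_abs_sin_ge_half:
  fixes Q \<delta> \<eta> c :: real
  assumes "Q > 0" "\<delta> > 0" "6 * Q * \<delta> \<le> pi" "2 * pi \<le> Q * \<eta>"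
  obtains X where "finite X" "X \<subseteq> {c - \<eta>..c + \<eta>}" "inj_on (\<lambda>x. \<lfloor>x / \<delta>\<rfloor>) X"
    "\<eta> / (6 * \<delta>) \<le> real (card X)" "\<And>x. x \<in> X \<Longrightarrow> 1 / 2 \<le> \<bar>sin (Q * x)\<bar>"
proof -
  define J where "J = {j::int. (c - \<eta>) * Q / pi \<le> of_int j \<and> of_int j \<le> (c + \<eta>) * Q / pi - 1}"
  define I where "I j = {m::int. of_int j * pi + pi / 6 \<le> Q * (2 * \<delta> * of_int m)
      \<and> Q * (2 * \<delta> * of_int m) \<le> of_int j * pi + 5 * pi / 6}" for j :: int
  define X where "X = (\<lambda>m. 2 * \<delta> * of_int m) ` (\<Union>j\<in>J. I j)"
  have pos: "0 < 2 * \<delta> * Q" using assms by simp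
  have I_eq: "I j = {m. (of_int j * pi + pi / 6) / (2 * \<delta> * Q) \<le> of_int m
      \<and> of_int m \<le> (of_int j * pi + 5 * pi / 6) / (2 * \<delta> * Q)}" for j
    unfolding I_def using pos by (simp add: pos_divide_le_eq pos_le_divide_eq mult_ac)
  have fin: "finite J" "\<And>j. finite (I j)"
    unfolding J_def I_eq by (simp_all add: finite_int_between)
  have "pi / (6 * \<delta> * Q) \<le> real (card (I j))" for j
    using card_int_between_ge[of "(of_int j * pi + 5 * pi / 6) / (2 * \<delta> * Q)" "(of_int j * pi + pi / 6) / (2 * \<delta> * Q)"]
      assms pos unfolding I_eq by (simp add: field_simps)
  then have "real (card J) * (pi / (6 * \<delta> * Q)) \<le> real (card (\<Union>j\<in>J. I j))"
    using fin disjoint_family_sin_windows unfolding I_def by (intro card_UN_disjoint_ge) auto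
  moreover have "\<eta> * Q / pi \<le> real (card J)"
  proof -
    have "(c + \<eta>) * Q / pi - 1 - (c - \<eta>) * Q / pi - 1 = 2 * (\<eta> * Q / pi) - 2"
      by (simp add: field_simps)
    moreover have "2 \<le> \<eta> * Q / pi" using assms(4) by (simp add: field_simps)
    ultimately show ?thesis
      using card_int_between_ge[of "(c + \<eta>) * Q / pi - 1" "(c - \<eta>) * Q / pi"]
      unfolding J_def by linarith
  qed
  then have "(\<eta> * Q / pi) * (pi / (6 * \<delta> * Q)) \<le> real (card J) * (pi / (6 * \<delta> * Q))"
    using pos by (intro mult_right_mono) auto
  moreover have "(\<eta> * Q / pi) * (pi / (6 * \<delta> * Q)) = \<eta> / (6 * \<delta>)"
    using assms by (simp add: field_simps)
  moreover have "card X = card (\<Union>j\<in>J. I j)"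
    unfolding X_def using assms(2) by (intro card_image inj_onI) simp
  ultimately have "\<eta> / (6 * \<delta>) \<le> real (card X)" by linarith
  moreover have "\<lfloor>2 * \<delta> * of_int m / \<delta>\<rfloor> = 2 * m" for m
  proof -
    have "2 * \<delta> * of_int m / \<delta> = real_of_int (2 * m)" using assms(2) by simp
    then show ?thesis by (simp only: floor_of_int)
  qed
  then have "inj_on (\<lambda>x. \<lfloor>x / \<delta>\<rfloor>) X"
    unfolding X_def by (intro inj_onI) auto
  moreover have "finite X"
    unfolding X_def using fin by simp
  moreover have "X \<subseteq> {c - \<eta>..c + \<eta>}" "\<And>x. x \<in> X \<Longrightarrow> 1 / 2 \<le> \<bar>sin (Q * x)\<bar>"
    using sin_window_point[OF assms(1)] unfolding X_def J_def I_def by auto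
  ultimately show ?thesis using that by blast
qed

lemma box_count_surface_ge_if_oscillating:
  fixes f :: "real \<Rightarrow> real \<Rightarrow> real" and a b \<delta> \<Omega> W :: real
  assumes \<delta>: "\<delta> > 0" and W: "0 < W" "W \<le> b / 2" and \<Omega>: "2 * \<delta> \<le> \<Omega>"
    and X: "finite X" "X \<subseteq> {0..a}" "inj_on (\<lambda>x. \<lfloor>x / \<delta>\<rfloor>) X"
    and cont: "\<And>x. x \<in> X \<Longrightarrow> continuous_on {0..b} (f x)"
    and osc: "\<And>x t0. x \<in> X \<Longrightarrow> \<exists>t1\<in>{t0..t0 + W}. \<exists>t2\<in>{t0..t0 + W}. \<Omega> \<le> \<bar>f x t1 - f x t2\<bar>"
    and fin: "finite (meeting_cubes (surface f a b) \<delta>)"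
  shows "real (card X) * (b / (2 * (W + 2 * \<delta>))) * (\<Omega> / (2 * \<delta>)) \<le> real (box_count (surface f a b) \<delta>)"
proof -
  define G where "G = W + 2 * \<delta>"
  define B where "B = {..nat \<lfloor>(b - W) / G\<rfloor>}"
  have "G > 0" "0 \<le> (b - W) / G" using W \<delta> by (simp_all add: G_def)
  have blocks: "0 \<le> real \<beta> * G \<and> real \<beta> * G + W \<le> b" if "\<beta> \<in> B" for \<beta>
  proof -
    have "real \<beta> \<le> of_int \<lfloor>(b - W) / G\<rfloor>"
      using that \<open>0 \<le> (b - W) / G\<close> unfolding B_def by (simp add: le_nat_iff)
    then have "real \<beta> \<le> (b - W) / G" by linarith
    then show ?thesis using \<open>G > 0\<close> by (simp add: pos_le_divide_eq)
  qed
  have gap: "t + 2 * \<delta> \<le> t'" if "\<beta> < \<beta>'" "t \<le> real \<beta> * G + W" "real \<beta>' * G \<le> t'" for \<beta> \<beta>' :: nat and t t'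
  proof -
    have "(real \<beta> + 1) * G \<le> real \<beta>' * G" using that(1) \<open>G > 0\<close> by (intro mult_right_mono) auto
    then show ?thesis using that(2,3) unfolding G_def by (simp add: algebra_simps)
  qed
  have "real (card X) * real (card B) * (\<Omega> / \<delta> - 1) \<le> real (box_count (surface f a b) \<delta>)"
  proof (rule box_count_graph_ge[where lo = "\<lambda>\<beta>. real \<beta> * G" and hi = "\<lambda>\<beta>. real \<beta> * G + W"])
    show "\<delta> < \<bar>t - t'\<bar>" if "\<beta> \<in> B" "\<beta>' \<in> B" "\<beta> \<noteq> \<beta>'"
      "t \<in> {real \<beta> * G..real \<beta> * G + W}" "t' \<in> {real \<beta>' * G..real \<beta>' * G + W}" for \<beta> \<beta>' t t'
      using that gap[of \<beta> \<beta>' t t'] gap[of \<beta>' \<beta> t' t] \<delta> by (cases "\<beta> < \<beta>'") auto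
  qed (use \<delta> X cont osc fin blocks in \<open>auto simp: B_def\<close>)
  moreover have "b / (2 * G) \<le> real (card B)"
  proof -
    have "(b - W) / G \<le> real (card B)"
      unfolding B_def using \<open>0 \<le> (b - W) / G\<close> by simp linarith
    moreover have "b / (2 * G) \<le> (b - W) / G"
      using W \<open>G > 0\<close> by (simp add: divide_right_mono field_simps)
    ultimately show ?thesis by linarith
  qed
  moreover have "\<Omega> / (2 * \<delta>) \<le> \<Omega> / \<delta> - 1" "0 \<le> \<Omega> / (2 * \<delta>)"
    using \<Omega> \<delta> by (simp_all add: field_simps)
  ultimately have "real (card X) * (b / (2 * G)) * (\<Omega> / (2 * \<delta>))
      \<le> real (card X) * real (card B) * (\<Omega> / \<delta> - 1)"
    by (intro mult_mono mult_left_mono) auto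
  with \<open>real (card X) * real (card B) * (\<Omega> / \<delta> - 1) \<le> _\<close> show ?thesis
    unfolding G_def by linarith
qed

context lacunary_wave
begin

lemma r_lam_power_eq_powr: "(r * lam) ^ k = (lam ^ k) powr (s / 2)"
proof -
  have "(lam ^ k) powr 1 = lam ^ k" using lam_pos by simp
  then have "(r * lam) ^ k = (lam ^ k) powr (-(1 - s / 2)) * (lam ^ k) powr 1"
    by (simp only: power_mult_distrib r_power_eq_powr)
  also have "\<dots> = (lam ^ k) powr (-(1 - s / 2) + 1)"
    by (simp only: powr_add)
  finally show ?thesis by simp
qed

lemma r_lam_power_ge:
  assumes "\<delta> > 0" "(1 / 4) / \<delta> < lam ^ Suc k"
  shows "(1 / (4 * lam)) powr (s / 2) * \<delta> powr (-(s / 2)) \<le> (r * lam) ^ k"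
proof -
  have "(1 / (4 * lam)) * (1 / \<delta>) \<le> lam ^ k"
    using assms lam_pos by (simp add: field_simps)
  then have "((1 / (4 * lam)) * (1 / \<delta>)) powr (s / 2) \<le> (lam ^ k) powr (s / 2)"
    using assms lam_pos s_pos by (intro powr_mono2) auto
  moreover have "((1 / (4 * lam)) * (1 / \<delta>)) powr (s / 2) = (1 / (4 * lam)) powr (s / 2) * \<delta> powr (-(s / 2))"
    using assms lam_pos by (simp only: powr_mult powr_divide powr_one_eq_one powr_minus_divide)
  ultimately show ?thesis
    unfolding r_lam_power_eq_powr by simp
qed

lemma box_count_Prob_ge_at_scale:
  fixes k :: nat and T \<eta> c W \<delta> :: real
  assumes "T > 0" and \<eta>: "0 < \<eta>" "\<eta> \<le> pi / (2 * real q)" and "0 < W"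
    and osc: "\<And>x t0. \<bar>x - pi / real q\<bar> \<le> \<eta> \<Longrightarrow> 1 / 2 \<le> \<bar>sin (real q ^ k * x)\<bar>
      \<Longrightarrow> \<exists>t1\<in>{t0..t0 + W / lam ^ k}. \<exists>t2\<in>{t0..t0 + W / lam ^ k}. c * r ^ k \<le> \<bar>Prob q s x t1 - Prob q s x t2\<bar>"
    and \<delta>: "0 < \<delta>" "4 * lam ^ k * \<delta> \<le> 1"
    and k: "2 * pi \<le> real q ^ k * \<eta>" "2 * W \<le> T * lam ^ k" "2 * \<delta> \<le> c * r ^ k"
    and fin: "finite (meeting_cubes (surface (Prob q s) pi T) \<delta>)"
  shows "\<eta> / (6 * \<delta>) * (T * lam ^ k / (2 * (W + 1 / 2))) * (c * r ^ k / (2 * \<delta>))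
    \<le> real (box_count (surface (Prob q s) pi T) \<delta>)"
proof -
  define Q where "Q = real q ^ k"
  have "lam ^ k = Q * Q"
    unfolding lam_def Q_def by (simp add: power2_eq_square power_mult_distrib)
  then have "4 * (Q * Q * \<delta>) \<le> 1" using \<delta>(2) by (simp add: mult_ac)
  moreover have "Q \<le> Q * Q"
    using mult_right_mono[of 1 Q Q] q_ge_2_real unfolding Q_def by simp
  then have "Q * \<delta> \<le> Q * Q * \<delta>" using \<delta>(1) by (intro mult_right_mono) auto
  ultimately have "6 * real q ^ k * \<delta> \<le> pi"
    using pi_gt3 unfolding Q_def by linarith
  then obtain X where X: "finite X" "X \<subseteq> {pi / real q - \<eta>..pi / real q + \<eta>}" "inj_on (\<lambda>x. \<lfloor>x / \<delta>\<rfloor>) X"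
    "\<eta> / (6 * \<delta>) \<le> real (card X)" "\<And>x. x \<in> X \<Longrightarrow> 1 / 2 \<le> \<bar>sin (real q ^ k * x)\<bar>"
    using separated_points_abs_sin_ge_half[of "real q ^ k" \<delta> \<eta> "pi / real q"] q_ge_2_real \<delta> k(1) by auto
  have "pi / real q \<le> pi / 2"
    using q_ge_2_real by (intro divide_left_mono) auto
  moreover have "pi / (2 * real q) = (pi / real q) / 2" by simp
  ultimately have "0 \<le> pi / real q - \<eta>" "pi / real q + \<eta> \<le> pi"
    using \<eta> pi_gt_zero by linarith+
  then have "{pi / real q - \<eta>..pi / real q + \<eta>} \<subseteq> {0..pi}" by auto
  have "real (card X) * (T / (2 * (W / lam ^ k + 2 * \<delta>))) * (c * r ^ k / (2 * \<delta>))
      \<le> real (box_count (surface (Prob q s) pi T) \<delta>)"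
  proof (rule box_count_surface_ge_if_oscillating)
    show "W / lam ^ k \<le> T / 2" using k(2) lam_pos by (simp add: field_simps)
    show "\<exists>t1\<in>{t0..t0 + W / lam ^ k}. \<exists>t2\<in>{t0..t0 + W / lam ^ k}. c * r ^ k \<le> \<bar>Prob q s x t1 - Prob q s x t2\<bar>"
      if "x \<in> X" for x t0
    proof -
      have "\<bar>x - pi / real q\<bar> \<le> \<eta>" using X(2) that by (auto simp: abs_le_iff)
      then show ?thesis using osc X(5) that by blast
    qed
  qed (use X \<delta> k(3) \<open>0 < W\<close> lam_pos \<open>{_.._} \<subseteq> {0..pi}\<close> fin continuous_on_Prob in auto)
  moreover have T_le: "T * lam ^ k / (2 * (W + 1 / 2)) \<le> T / (2 * (W / lam ^ k + 2 * \<delta>))"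
  proof -
    have "W / lam ^ k + 2 * \<delta> \<le> (W + 1 / 2) / lam ^ k"
      using \<delta> lam_pos by (simp add: field_simps)
    then have le: "2 * (W / lam ^ k + 2 * \<delta>) \<le> 2 * ((W + 1 / 2) / lam ^ k)" by (rule mult_left_mono) simp
    have pos: "0 < 2 * ((W + 1 / 2) / lam ^ k) * (2 * (W / lam ^ k + 2 * \<delta>))"
      using \<open>0 < W\<close> \<delta> lam_pos by (intro mult_pos_pos add_pos_pos divide_pos_pos) auto
    have "T / (2 * ((W + 1 / 2) / lam ^ k)) \<le> T / (2 * (W / lam ^ k + 2 * \<delta>))"
      by (rule divide_left_mono[OF le _ pos]) (use \<open>T > 0\<close> in simp)
    moreover have "T / (2 * ((W + 1 / 2) / lam ^ k)) = T * lam ^ k / (2 * (W + 1 / 2))"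
      using lam_pos by simp
    ultimately show ?thesis by simp
  qed
  moreover have "\<eta> / (6 * \<delta>) * (T * lam ^ k / (2 * (W + 1 / 2))) * (c * r ^ k / (2 * \<delta>))
      \<le> real (card X) * (T / (2 * (W / lam ^ k + 2 * \<delta>))) * (c * r ^ k / (2 * \<delta>))"
    using X(4) T_le \<open>T > 0\<close> \<open>0 < W\<close> \<delta> k(3) lam_pos by (intro mult_right_mono mult_mono) auto
  ultimately show ?thesis by linarith
qed

end

context lacunary_wave
begin

lemma box_count_Prob_lower:
  assumes "T > 0"
  obtains c' \<delta>0 where "c' > 0" "\<delta>0 > 0"
    "\<And>\<delta>. 0 < \<delta> \<Longrightarrow> \<delta> < \<delta>0 \<Longrightarrow> c' * \<delta> powr (-(2 + s / 2)) \<le> real (box_count (surface (Prob q s) pi T) \<delta>)"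
proof -
  obtain \<eta> c W K where \<eta>: "0 < \<eta>" "\<eta> \<le> pi / (2 * real q)" and "0 < c" "0 < W"
    and osc: "\<And>k x t0. K \<le> k \<Longrightarrow> \<bar>x - pi / real q\<bar> \<le> \<eta> \<Longrightarrow> 1 / 2 \<le> \<bar>sin (real q ^ k * x)\<bar>
      \<Longrightarrow> \<exists>t1\<in>{t0..t0 + W / lam ^ k}. \<exists>t2\<in>{t0..t0 + W / lam ^ k}. c * r ^ k \<le> \<bar>Prob q s x t1 - Prob q s x t2\<bar>"
    using Prob_oscillation_lower by blast
  obtain C \<delta>1 where "\<delta>1 > 0" and upper: "\<And>\<delta>. 0 < \<delta> \<Longrightarrow> \<delta> < \<delta>1
      \<Longrightarrow> finite (meeting_cubes (surface (Prob q s) pi T) \<delta>)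
        \<and> real (box_count (surface (Prob q s) pi T) \<delta>) \<le> C * \<delta> powr (-(2 + s / 2))"
    using box_count_Prob_upper[OF assms] by blast
  have "\<forall>\<^sub>F k in sequentially. K \<le> k \<and> 2 * pi / \<eta> < real q ^ k \<and> 2 * W / T < lam ^ k \<and> 1 / c < (r * lam) ^ k"
    using q_ge_2_real lam_ge_4 r_lam_gt_1
    by (intro eventually_conj eventually_ge_at_top eventually_power_gt) auto
  then obtain Kb where Kb: "\<And>k. Kb \<le> k \<Longrightarrow>
      K \<le> k \<and> 2 * pi / \<eta> < real q ^ k \<and> 2 * W / T < lam ^ k \<and> 1 / c < (r * lam) ^ k"
    unfolding eventually_sequentially by blast
  define D where "D = W + 1 / 2"
  define A where "A = \<eta> * T * c / (24 * D)"
  have "D > 0" unfolding D_def using \<open>0 < W\<close> by simp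
  then have "A > 0" unfolding A_def using \<eta> \<open>T > 0\<close> \<open>0 < c\<close> by simp
  show ?thesis
  proof (rule that[of "A * (1 / (4 * lam)) powr (s / 2)" "min \<delta>1 ((1 / 4) / lam ^ Suc Kb)"])
    show "A * (1 / (4 * lam)) powr (s / 2) > 0" "min \<delta>1 ((1 / 4) / lam ^ Suc Kb) > 0"
      using \<open>A > 0\<close> \<open>\<delta>1 > 0\<close> lam_pos by simp_all
    fix \<delta> :: real assume \<delta>: "0 < \<delta>" "\<delta> < min \<delta>1 ((1 / 4) / lam ^ Suc Kb)"
    then have "lam ^ Suc Kb < (1 / 4) / \<delta>" using lam_pos by (simp add: field_simps)
    moreover have "1 \<le> lam ^ Suc Kb" using lam_ge_4 by (intro one_le_power) simp
    ultimately obtain k where k: "lam ^ k \<le> (1 / 4) / \<delta>" "(1 / 4) / \<delta> < lam ^ Suc k"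
      using exists_power_bracket[of lam "(1 / 4) / \<delta>"] lam_ge_4 by auto
    with \<open>lam ^ Suc Kb < (1 / 4) / \<delta>\<close> have "lam ^ Suc Kb < lam ^ Suc k" by linarith
    then have "Kb \<le> k"
      using power_less_imp_less_exp[of lam "Suc Kb" "Suc k"] lam_ge_4 by simp
    then have k_large: "K \<le> k" "2 * pi / \<eta> < real q ^ k" "2 * W / T < lam ^ k" "1 / c < (r * lam) ^ k"
      using Kb by blast+
    have four: "4 * lam ^ k * \<delta> \<le> 1" using k(1) \<delta>(1) by (simp add: field_simps)
    have "4 * \<delta> * lam ^ k \<le> c * r ^ k * lam ^ k"
      using four k_large(4) \<open>0 < c\<close> by (simp add: power_mult_distrib field_simps)
    then have two_\<delta>: "2 * \<delta> \<le> c * r ^ k"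
      using lam_pos \<delta>(1) by (simp add: mult_le_cancel_right_pos)
    have scale: "2 * pi \<le> real q ^ k * \<eta>" "2 * W \<le> T * lam ^ k"
      using k_large(2,3) \<eta>(1) \<open>T > 0\<close> by (simp_all add: pos_divide_less_eq less_imp_le mult.commute)
    have "finite (meeting_cubes (surface (Prob q s) pi T) \<delta>)"
      using upper[of \<delta>] \<delta> by simp
    from box_count_Prob_ge_at_scale[OF assms \<eta> \<open>0 < W\<close> osc[OF k_large(1)] \<delta>(1) four scale two_\<delta> this]
    have "\<eta> / (6 * \<delta>) * (T * lam ^ k / (2 * D)) * (c * r ^ k / (2 * \<delta>))
        \<le> real (box_count (surface (Prob q s) pi T) \<delta>)"
      unfolding D_def .
    moreover have "\<eta> / (6 * \<delta>) * (T * lam ^ k / (2 * D)) * (c * r ^ k / (2 * \<delta>)) = A * (r * lam) ^ k / \<delta>\<^sup>2"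
      unfolding A_def using \<delta>(1) \<open>D > 0\<close> by (simp add: power_mult_distrib power2_eq_square field_simps)
    moreover have "\<delta> powr (-(2 + s / 2)) = \<delta> powr (-(s / 2)) / \<delta>\<^sup>2"
    proof -
      have "-(2 + s / 2) = -(s / 2) - 2" by simp
      then show ?thesis using \<delta>(1) by (simp only:) (simp add: powr_diff powr_numeral)
    qed
    then have "A * (1 / (4 * lam)) powr (s / 2) * \<delta> powr (-(2 + s / 2))
        = A * ((1 / (4 * lam)) powr (s / 2) * \<delta> powr (-(s / 2))) / \<delta>\<^sup>2"
      by simp
    moreover have "A * ((1 / (4 * lam)) powr (s / 2) * \<delta> powr (-(s / 2))) / \<delta>\<^sup>2 \<le> A * (r * lam) ^ k / \<delta>\<^sup>2"
      using r_lam_power_ge[OF \<delta>(1) k(2)] \<open>A > 0\<close> \<delta>(1) by (intro divide_right_mono mult_left_mono) auto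
    ultimately show "A * (1 / (4 * lam)) powr (s / 2) * \<delta> powr (-(2 + s / 2))
        \<le> real (box_count (surface (Prob q s) pi T) \<delta>)"
      by linarith
  qed
qed

end

theorem theorem1:
  fixes q :: nat and s T :: real
  assumes "q \<ge> 2" and "0 < s" and "s < 2" and "T > 0"
  shows "has_box_dim {(x, t, Prob q s x t) | x t. x \<in> {0..pi} \<and> t \<in> {0..T}} (2 + s / 2)"
proof -
  interpret lacunary_wave q s
    using assms by unfold_locales
  obtain C \<delta>1 where "C > 0" "\<delta>1 > 0" and upper: "\<And>\<delta>. 0 < \<delta> \<Longrightarrow> \<delta> < \<delta>1
      \<Longrightarrow> finite (meeting_cubes (surface (Prob q s) pi T) \<delta>)
        \<and> real (box_count (surface (Prob q s) pi T) \<delta>) \<le> C * \<delta> powr (-(2 + s / 2))"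
    using box_count_Prob_upper[OF assms(4)] by blast
  obtain c \<delta>2 where "c > 0" "\<delta>2 > 0" and lower: "\<And>\<delta>. 0 < \<delta> \<Longrightarrow> \<delta> < \<delta>2
      \<Longrightarrow> c * \<delta> powr (-(2 + s / 2)) \<le> real (box_count (surface (Prob q s) pi T) \<delta>)"
    using box_count_Prob_lower[OF assms(4)] by blast
  have "has_box_dim (surface (Prob q s) pi T) (2 + s / 2)"
  proof (rule has_box_dimI[OF \<open>c > 0\<close> \<open>C > 0\<close>])
    show "0 < min \<delta>1 \<delta>2" using \<open>\<delta>1 > 0\<close> \<open>\<delta>2 > 0\<close> by simp
    fix \<delta> :: real assume "0 < \<delta>" "\<delta> < min \<delta>1 \<delta>2"
    then show "c * \<delta> powr - (2 + s / 2) \<le> real (box_count (surface (Prob q s) pi T) \<delta>)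
        \<and> real (box_count (surface (Prob q s) pi T) \<delta>) \<le> C * \<delta> powr - (2 + s / 2)"
      using upper[of \<delta>] lower[of \<delta>] by simp
  qed
  then show ?thesis unfolding surface_def .
qed

end
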